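(* Let $X$ be a cell complex such that the closure of each cell has the rational homology of a point, let $C=C_\bullet X$ be its rational cellular chains and $TC$ the tensor algebra on (the shift of) $C$. Let $\delta_1$ be the boundary operator and $\delta_2:C\to C\otimes C$ a local chain-level comultiplication (a chain map) which is cocommutative and coassociative on $0$-cells. Then there exist local maps $\delta_k:C\to C^{\otimes k}$, $k\ge3$, vanishing on $0$-cells, such that the derivation $\delta=\delta_1+\delta_2+\delta_3+\cdots$ of $TC$ (each $\delta_k$ extended as a derivation) satisfies $[\delta,\delta]=0$, i.e. $(BC,\delta)$ is a local A$_\infty$ coalgebra structure on $C$.
   Context: A map $\epsilon\in\mathrm{Hom}(C,TC)$ is local if for every cell $e_\alpha$ it sends $C_\bullet(\overline e_\alpha)$ into $TC_\bullet(\overline e_\alpha)$, the tensor algebra on the chains of the closure of $e_\alpha$. $[\cdot,\cdot]$ is the graded commutator of derivations. *)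

theory Defs
  imports Complex_Main
begin

text \<open>
Cells are the elements of the type 'c.  cdim e is the dimension of the cell e,
bd e f is the incidence number [e : f] (coefficient of f in the cellular boundary
of e), and cl e is the set of cells of the closure of e (a finite subcomplex).
Rational chains are finitely supported functions 'c => rat.  A word w :: 'c list
of length k is the basis element (s^-1 w1) ... (s^-1 wk) of the tensor algebra TC
on the desuspension of C; elements of TC are finitely supported functions
'c list => rat.  The shifted degree of a cell e is cdim e - 1.
\<close>

definition fsupp :: "('a \<Rightarrow> rat) \<Rightarrow> bool" where
  "fsupp f \<longleftrightarrow> finite {x. f x \<noteq> 0}"

definition supported_in :: "('c \<Rightarrow> rat) \<Rightarrow> 'c set \<Rightarrow> bool" where
  "supported_in z S \<longleftrightarrow> (\<forall>c. z c \<noteq> 0 \<longrightarrow> c \<in> S)"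

definition homogeneous :: "('c \<Rightarrow> nat) \<Rightarrow> nat \<Rightarrow> ('c \<Rightarrow> rat) \<Rightarrow> bool" where
  "homogeneous cdim n z \<longleftrightarrow> (\<forall>c. z c \<noteq> 0 \<longrightarrow> cdim c = n)"

definition chain_bd :: "('c \<Rightarrow> 'c \<Rightarrow> rat) \<Rightarrow> ('c \<Rightarrow> rat) \<Rightarrow> ('c \<Rightarrow> rat)" where
  "chain_bd bd z = (\<lambda>f. \<Sum>e\<in>{e. z e \<noteq> 0}. z e * bd e f)"

definition chains_in :: "('c \<Rightarrow> nat) \<Rightarrow> 'c set \<Rightarrow> nat \<Rightarrow> ('c \<Rightarrow> rat) set" where
  "chains_in cdim S n = {z. fsupp z \<and> supported_in z S \<and> homogeneous cdim n z}"

definition cell_complex ::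
  "('c \<Rightarrow> nat) \<Rightarrow> ('c \<Rightarrow> 'c \<Rightarrow> rat) \<Rightarrow> ('c \<Rightarrow> 'c set) \<Rightarrow> bool" where
  "cell_complex cdim bd cl \<longleftrightarrow>
     (\<forall>e. e \<in> cl e \<and> finite (cl e)) \<and>
     (\<forall>e f. f \<in> cl e \<longrightarrow> cl f \<subseteq> cl e) \<and>
     (\<forall>e f. f \<in> cl e \<and> f \<noteq> e \<longrightarrow> cdim f < cdim e) \<and>
     (\<forall>e f. bd e f \<noteq> 0 \<longrightarrow> f \<in> cl e \<and> cdim f + 1 = cdim e) \<and>
     (\<forall>e g. (\<Sum>f\<in>cl e. bd e f * bd f g) = 0) \<and>
     (\<forall>e. cdim e = 1 \<longrightarrow> (\<Sum>f\<in>cl e. bd e f) = 0)"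

definition rat_homology_of_point ::
  "('c \<Rightarrow> nat) \<Rightarrow> ('c \<Rightarrow> 'c \<Rightarrow> rat) \<Rightarrow> 'c set \<Rightarrow> bool" where
  "rat_homology_of_point cdim bd S \<longleftrightarrow>
     (\<forall>n>0. \<forall>z\<in>chains_in cdim S n. chain_bd bd z = (\<lambda>_. 0) \<longrightarrow>
        (\<exists>y\<in>chains_in cdim S (n+1). chain_bd bd y = z)) \<and>
     (\<exists>z0\<in>chains_in cdim S 0.
        (\<nexists>y. y \<in> chains_in cdim S 1 \<and> chain_bd bd y = z0) \<and>
        (\<forall>z\<in>chains_in cdim S 0. \<exists>q. \<exists>y\<in>chains_in cdim S 1.
            z = (\<lambda>c. q * z0 c + chain_bd bd y c)))"

definition local_map :: "('c \<Rightarrow> 'c set) \<Rightarrow> ('c \<Rightarrow> 'c list \<Rightarrow> rat) \<Rightarrow> bool" where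
  "local_map cl \<epsilon> \<longleftrightarrow> (\<forall>e w. \<epsilon> e w \<noteq> 0 \<longrightarrow> set w \<subseteq> cl e)"

text \<open>Koszul sign (-1)^(shifted degree of the word p).\<close>
definition psign :: "('c \<Rightarrow> nat) \<Rightarrow> 'c list \<Rightarrow> rat" where
  "psign cdim p = (if even (sum_list (map cdim p) + length p) then 1 else -1)"

text \<open>The (odd) derivation of TC extending \<epsilon> : C -> TC:
  D(x1...xn) = sum_i (-1)^(|x1|+...+|x_(i-1)|) x1...x_(i-1) \<epsilon>(x_i) x_(i+1)...xn,
  written coefficientwise.\<close>
definition deriv :: "('c \<Rightarrow> nat) \<Rightarrow> ('c \<Rightarrow> 'c list \<Rightarrow> rat) \<Rightarrow> ('c list \<Rightarrow> rat) \<Rightarrow> ('c list \<Rightarrow> rat)" where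
  "deriv cdim \<epsilon> t u =
     (\<Sum>i\<in>{0..length u}. \<Sum>j\<in>{i..length u}.
        \<Sum>c\<in>{c. t (take i u @ c # drop j u) \<noteq> 0}.
          psign cdim (take i u) * t (take i u @ c # drop j u) * \<epsilon> c (take (j - i) (drop i u)))"

definition odd_commutator ::
  "(('c list \<Rightarrow> rat) \<Rightarrow> ('c list \<Rightarrow> rat)) \<Rightarrow> (('c list \<Rightarrow> rat) \<Rightarrow> ('c list \<Rightarrow> rat)) \<Rightarrow>
   ('c list \<Rightarrow> rat) \<Rightarrow> ('c list \<Rightarrow> rat)" where
  "odd_commutator D E t = (\<lambda>u. D (E t) u + E (D t) u)"

text \<open>delta = delta_1 + delta_2 + delta_3 + ..., with delta_1 the boundary and delta_2 the
  desuspension of the comultiplication Delta (Delta e a b = coefficient of a (x) b in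
  Delta(e)), using s^-1 (x) s^-1 (a (x) b) = (-1)^|a| s^-1 a s^-1 b.\<close>
definition total_delta ::
  "('c \<Rightarrow> nat) \<Rightarrow> ('c \<Rightarrow> 'c \<Rightarrow> rat) \<Rightarrow> ('c \<Rightarrow> 'c \<Rightarrow> 'c \<Rightarrow> rat) \<Rightarrow>
   (nat \<Rightarrow> 'c \<Rightarrow> 'c list \<Rightarrow> rat) \<Rightarrow> 'c \<Rightarrow> 'c list \<Rightarrow> rat" where
  "total_delta cdim bd \<Delta> \<delta> e w =
     (if length w = 1 then bd e (w ! 0)
      else if length w = 2 then (-1) ^ cdim (w ! 0) * \<Delta> e (w ! 0) (w ! 1)
      else if length w \<ge> 3 then \<delta> (length w) e w
      else 0)"

end

theory Submission
  imports Defs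
begin

(*
  The derivation D = delta_1 + delta_2 + ... of TC is odd, so D^2 = [D,D]/2 is again a
  derivation, and it vanishes once it vanishes on generators. The delta_k are built by
  induction on k. Let D' = delta_1 + ... + delta_(k-1) and suppose D'^2 c vanishes in word
  lengths < k for every cell c (for k = 3 this is bd^2 = 0 together with Delta being a chain
  map). Then its word-length-k part R(c) satisfies bd R(c) = R(bd c), and delta_k has to solve
  bd delta_k(c) + delta_k(bd c) = - R(c). This is solved by induction on dim c: the right-hand
  side minus delta_k(bd c) is a cycle of positive degree in the k-fold tensor power of the
  chains of the closure of c. That closure has the rational homology of a point, hence so do
  the tensor powers of its chains (Kuenneth, made explicit with a contracting homotopy onto a
  0-cycle), so the cycle bounds, and the solution is local. On 0-cells nothing is to be done:
  locality and degree force Delta(e) to be a multiple of e (x) e.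
*)

section \<open>Finitely supported functions and linear extension\<close>

definition supp :: "('a \<Rightarrow> rat) \<Rightarrow> 'a set" where
  "supp t = {v. t v \<noteq> 0}"

definition single :: "'a \<Rightarrow> 'a \<Rightarrow> rat" where
  "single v = (\<lambda>u. if u = v then 1 else 0)"

definition linext :: "('a \<Rightarrow> 'b \<Rightarrow> rat) \<Rightarrow> ('a \<Rightarrow> rat) \<Rightarrow> 'b \<Rightarrow> rat" where
  "linext F t = (\<lambda>u. \<Sum>v\<in>supp t. t v * F v u)"

lemma fsupp_iff_finite_supp: "fsupp t \<longleftrightarrow> finite (supp t)"
  by (simp add: fsupp_def supp_def)

lemma fsupp_single[simp]: "fsupp (single v)"
  by (simp add: fsupp_def single_def)

lemma fsupp_zero[simp]: "fsupp (\<lambda>_. 0)"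
  by (simp add: fsupp_def)

lemma fsupp_subset: "fsupp a \<Longrightarrow> (\<And>u. b u \<noteq> 0 \<Longrightarrow> a u \<noteq> 0) \<Longrightarrow> fsupp b"
  unfolding fsupp_def by (rule finite_subset[of _ "{x. a x \<noteq> 0}"]) auto

lemma fsupp_add: "fsupp a \<Longrightarrow> fsupp b \<Longrightarrow> fsupp (\<lambda>u. a u + b u)"
  unfolding fsupp_def by (rule finite_subset[of _ "{x. a x \<noteq> 0} \<union> {x. b x \<noteq> 0}"]) auto

lemma fsupp_diff: "fsupp a \<Longrightarrow> fsupp b \<Longrightarrow> fsupp (\<lambda>u. a u - b u)"
  unfolding fsupp_def by (rule finite_subset[of _ "{x. a x \<noteq> 0} \<union> {x. b x \<noteq> 0}"]) auto

lemma fsupp_scale: "fsupp a \<Longrightarrow> fsupp (\<lambda>u. c * a u)"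
  by (rule fsupp_subset) auto

lemma fsupp_neg: "fsupp a \<Longrightarrow> fsupp (\<lambda>u. - a u)"
  unfolding fsupp_def by simp

lemma fsupp_sum: "finite I \<Longrightarrow> (\<And>i. i \<in> I \<Longrightarrow> fsupp (t i)) \<Longrightarrow> fsupp (\<lambda>u. \<Sum>i\<in>I. t i u)"
  by (induction I rule: finite_induct) (auto intro: fsupp_add)

lemma sum_eq_single_term:
  assumes "finite A" "k \<in> A" "\<And>j. j \<in> A \<Longrightarrow> j \<noteq> k \<Longrightarrow> f j = 0"
  shows "sum f A = f k"
  using assms by (subst sum.remove[of A k]) (auto intro!: sum.neutral)

lemma sum_if_eq_vanishing:
  "finite A \<Longrightarrow> (b \<notin> A \<Longrightarrow> g b = 0) \<Longrightarrow> (\<Sum>y\<in>A. if y = b then g y else 0) = g b"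
  by (cases "b \<in> A") simp_all

lemma linext_eq_sum:
  assumes "finite A" "supp t \<subseteq> A"
  shows "linext F t u = (\<Sum>v\<in>A. t v * F v u)"
  unfolding linext_def
  by (rule sum.mono_neutral_left) (use assms in \<open>auto simp: supp_def\<close>)

lemma linext_zero[simp]: "linext F (\<lambda>_. 0) = (\<lambda>_. 0)"
  by (simp add: linext_def supp_def)

lemma linext_add:
  assumes "fsupp t" "fsupp t'"
  shows "linext F (\<lambda>u. t u + t' u) u = linext F t u + linext F t' u"
proof -
  let ?A = "supp t \<union> supp t'"
  have A: "finite ?A" using assms by (simp add: fsupp_iff_finite_supp)
  have "linext F (\<lambda>u. t u + t' u) u = (\<Sum>v\<in>?A. (t v + t' v) * F v u)"
    by (rule linext_eq_sum[OF A]) (auto simp: supp_def)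
  also have "\<dots> = (\<Sum>v\<in>?A. t v * F v u) + (\<Sum>v\<in>?A. t' v * F v u)"
    by (simp add: distrib_right sum.distrib)
  also have "\<dots> = linext F t u + linext F t' u"
    by (subst (1 2) linext_eq_sum[OF A]) auto
  finally show ?thesis .
qed

lemma linext_scale: "linext F (\<lambda>u. a * t u) u = a * linext F t u"
  by (cases "a = 0") (auto simp: linext_def supp_def sum_distrib_left mult.assoc)

lemma linext_sum:
  assumes "finite I" "\<And>i. i \<in> I \<Longrightarrow> fsupp (t i)"
  shows "linext F (\<lambda>u. \<Sum>i\<in>I. t i u) u = (\<Sum>i\<in>I. linext F (t i) u)"
  using assms
proof (induction I rule: finite_induct)
  case empty
  then show ?case by (simp add: linext_def supp_def)
next
  case (insert x I)
  then show ?case by (simp add: linext_add fsupp_sum)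
qed

lemma linext_fun_add: "linext (\<lambda>v u. F v u + G v u) t u = linext F t u + linext G t u"
  by (simp add: linext_def distrib_left sum.distrib)

lemma linext_fun_scale: "linext (\<lambda>v u. a * F v u) t u = a * linext F t u"
  by (simp add: linext_def sum_distrib_left algebra_simps)

lemma linext_fun_neg: "linext (\<lambda>v u. - F v u) t u = - linext F t u"
  by (simp add: linext_def sum_negf)

lemma linext_fun_diff: "linext (\<lambda>v u. F v u - G v u) t u = linext F t u - linext G t u"
  by (simp add: linext_def sum_subtractf algebra_simps)

lemma linext_fun_zero: "linext (\<lambda>v u. 0) t u = 0"
  by (simp add: linext_def)

lemma linext_fun_cong: "(\<And>v. t v \<noteq> 0 \<Longrightarrow> F v u = G v u) \<Longrightarrow> linext F t u = linext G t u"
  by (auto simp: linext_def supp_def intro!: sum.cong)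

lemma linext_arg_cong:
  assumes "\<And>v. F v u \<noteq> 0 \<Longrightarrow> t v = t' v" "fsupp t" "fsupp t'"
  shows "linext F t u = linext F t' u"
proof -
  let ?A = "supp t \<union> supp t'"
  have A: "finite ?A" using assms(2,3) by (simp add: fsupp_iff_finite_supp)
  have "(\<Sum>v\<in>?A. t v * F v u) = (\<Sum>v\<in>?A. t' v * F v u)"
    by (rule sum.cong[OF refl]) (metis assms(1) mult_zero_right)
  then show ?thesis by (subst (1 2) linext_eq_sum[OF A]) auto
qed

lemma linext_nonzeroD: "linext F t u \<noteq> 0 \<Longrightarrow> \<exists>v. t v \<noteq> 0 \<and> F v u \<noteq> 0"
  unfolding linext_def by (metis (mono_tags, lifting) mult_eq_0_iff sum.neutral)

lemma fsupp_linext: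
  assumes "fsupp t" "\<And>v. t v \<noteq> 0 \<Longrightarrow> fsupp (F v)"
  shows "fsupp (linext F t)"
proof -
  have "supp (linext F t) \<subseteq> (\<Union>v\<in>supp t. supp (F v))"
    by (auto simp: supp_def dest!: linext_nonzeroD)
  moreover have "finite (\<Union>v\<in>supp t. supp (F v))"
    using assms by (auto simp: fsupp_iff_finite_supp supp_def)
  ultimately show ?thesis by (simp add: fsupp_iff_finite_supp finite_subset)
qed

lemma linext_linext:
  assumes "fsupp t" "\<And>v. t v \<noteq> 0 \<Longrightarrow> fsupp (F v)"
  shows "linext G (linext F t) u = linext (\<lambda>v. linext G (F v)) t u"
proof -
  let ?B = "\<Union>v\<in>supp t. supp (F v)"
  have B: "finite ?B" using assms by (auto simp: fsupp_iff_finite_supp supp_def)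
  have "linext G (linext F t) u = (\<Sum>w\<in>?B. linext F t w * G w u)"
    by (rule linext_eq_sum[OF B]) (auto simp: supp_def dest!: linext_nonzeroD)
  also have "\<dots> = (\<Sum>w\<in>?B. \<Sum>v\<in>supp t. t v * F v w * G w u)"
    by (simp add: linext_def sum_distrib_right)
  also have "\<dots> = (\<Sum>v\<in>supp t. \<Sum>w\<in>?B. t v * F v w * G w u)"
    by (rule sum.swap)
  also have "\<dots> = (\<Sum>v\<in>supp t. t v * linext G (F v) u)"
  proof (rule sum.cong[OF refl])
    fix v assume v: "v \<in> supp t"
    have "linext G (F v) u = (\<Sum>w\<in>?B. F v w * G w u)"
      by (rule linext_eq_sum[OF B]) (use v in \<open>auto simp: supp_def\<close>)
    then show "(\<Sum>w\<in>?B. t v * F v w * G w u) = t v * linext G (F v) u"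
      by (simp add: sum_distrib_left mult.assoc)
  qed
  also have "\<dots> = linext (\<lambda>v. linext G (F v)) t u" by (simp add: linext_def)
  finally show ?thesis .
qed

lemma linext_single: "linext F (single v) = F v"
  by (rule ext) (simp add: linext_def supp_def single_def)

lemma linext_single_self: "fsupp t \<Longrightarrow> linext single t = t"
proof (rule ext)
  fix u assume "fsupp t"
  then have "linext single t u = (\<Sum>v\<in>supp t \<union> {u}. t v * single v u)"
    by (intro linext_eq_sum) (auto simp: fsupp_iff_finite_supp)
  also have "\<dots> = t u"
    by (subst sum_eq_single_term[of _ u]) (use \<open>fsupp t\<close> in \<open>auto simp: single_def fsupp_iff_finite_supp\<close>)
  finally show "linext single t u = t u" .
qed

section \<open>Concatenation with a fixed word\<close>

text \<open>\<open>lmul p b\<close> and \<open>rmul a s\<close> are the products \<open>p \<cdot> b\<close> and \<open>a \<cdot> s\<close> in the tensor algebra.\<close>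

definition lmul :: "'c list \<Rightarrow> ('c list \<Rightarrow> rat) \<Rightarrow> 'c list \<Rightarrow> rat" where
  "lmul p b = (\<lambda>u. if length p \<le> length u \<and> take (length p) u = p then b (drop (length p) u) else 0)"

definition rmul :: "('c list \<Rightarrow> rat) \<Rightarrow> 'c list \<Rightarrow> 'c list \<Rightarrow> rat" where
  "rmul a s = (\<lambda>u. if length s \<le> length u \<and> drop (length u - length s) u = s
                   then a (take (length u - length s) u) else 0)"

lemma rmul_append[simp]: "rmul a s (p @ s) = a p"
  by (simp add: rmul_def)

lemma rmul_not_suffix: "\<not> (\<exists>p. u = p @ s) \<Longrightarrow> rmul a s u = 0"
  unfolding rmul_def by (metis append_take_drop_id)

lemma lmul_append[simp]: "lmul p b (p @ s) = b s"
  by (simp add: lmul_def)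

lemma lmul_not_prefix: "\<not> (\<exists>s. u = p @ s) \<Longrightarrow> lmul p b u = 0"
  unfolding lmul_def by (metis append_take_drop_id)

lemma rmul_nonzeroD: "rmul a s u \<noteq> 0 \<Longrightarrow> \<exists>p. u = p @ s \<and> a p \<noteq> 0"
  by (metis rmul_append rmul_not_suffix)

lemma lmul_nonzeroD: "lmul p b u \<noteq> 0 \<Longrightarrow> \<exists>s. u = p @ s \<and> b s \<noteq> 0"
  by (metis lmul_append lmul_not_prefix)

lemma rmul_eqI:
  assumes "\<And>p. f (p @ s) = a p" "\<And>u. \<not> (\<exists>p. u = p @ s) \<Longrightarrow> f u = 0"
  shows "rmul a s = f"
proof (rule ext)
  fix u show "rmul a s u = f u"
  proof (cases "\<exists>p. u = p @ s")
    case True then obtain p where "u = p @ s" by blast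
    then show ?thesis using assms(1) by simp
  next
    case False then show ?thesis using assms(2) rmul_not_suffix by metis
  qed
qed

lemma lmul_eqI:
  assumes "\<And>s. f (p @ s) = b s" "\<And>u. \<not> (\<exists>s. u = p @ s) \<Longrightarrow> f u = 0"
  shows "lmul p b = f"
proof (rule ext)
  fix u show "lmul p b u = f u"
  proof (cases "\<exists>s. u = p @ s")
    case True then obtain s where "u = p @ s" by blast
    then show ?thesis using assms(1) by simp
  next
    case False then show ?thesis using assms(2) lmul_not_prefix by metis
  qed
qed

lemma rmul_Nil[simp]: "rmul a [] = a"
  by (rule rmul_eqI) auto

lemma lmul_Nil[simp]: "lmul [] b = b"
  by (rule lmul_eqI) auto

lemma rmul_zero[simp]: "rmul (\<lambda>_. 0) s = (\<lambda>_. 0)"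
  by (rule rmul_eqI) auto

lemma lmul_zero[simp]: "lmul p (\<lambda>_. 0) = (\<lambda>_. 0)"
  by (rule lmul_eqI) auto

lemma rmul_add: "rmul (\<lambda>u. a u + b u) s = (\<lambda>u. rmul a s u + rmul b s u)"
  by (rule rmul_eqI) (auto simp: rmul_not_suffix)

lemma lmul_add: "lmul p (\<lambda>u. a u + b u) = (\<lambda>u. lmul p a u + lmul p b u)"
  by (rule lmul_eqI) (auto simp: lmul_not_prefix)

lemma rmul_scale: "rmul (\<lambda>u. c * a u) s = (\<lambda>u. c * rmul a s u)"
  by (rule rmul_eqI) (auto simp: rmul_not_suffix)

lemma lmul_scale: "lmul p (\<lambda>u. c * a u) = (\<lambda>u. c * lmul p a u)"
  by (rule lmul_eqI) (auto simp: lmul_not_prefix)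

lemma rmul_sum_fun: "rmul (\<lambda>u. \<Sum>f\<in>A. g f u) w u = (\<Sum>f\<in>A. rmul (g f) w u)"
  by (cases "\<exists>p. u = p @ w") (auto simp: rmul_not_suffix)

lemma rmul_rmul: "rmul (rmul a s) s' = rmul a (s @ s')"
proof (rule rmul_eqI[symmetric])
  fix p show "rmul (rmul a s) s' (p @ s @ s') = a p"
    using rmul_append[of "rmul a s" s' "p @ s"] by simp
next
  fix u assume nu: "\<not> (\<exists>p. u = p @ s @ s')"
  show "rmul (rmul a s) s' u = 0"
  proof (rule ccontr)
    assume "rmul (rmul a s) s' u \<noteq> 0"
    then obtain q where q: "u = q @ s'" "rmul a s q \<noteq> 0" using rmul_nonzeroD by blast
    then obtain p where "q = p @ s" using rmul_nonzeroD by blast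
    then show False using nu q by simp
  qed
qed

lemma lmul_lmul: "lmul p (lmul q b) = lmul (p @ q) b"
proof (rule lmul_eqI[symmetric])
  fix s show "lmul p (lmul q b) ((p @ q) @ s) = b s"
    by simp
next
  fix u assume nu: "\<not> (\<exists>s. u = (p @ q) @ s)"
  show "lmul p (lmul q b) u = 0"
  proof (rule ccontr)
    assume "lmul p (lmul q b) u \<noteq> 0"
    then obtain m where m: "u = p @ m" "lmul q b m \<noteq> 0" using lmul_nonzeroD by blast
    then obtain s where "m = q @ s" using lmul_nonzeroD by blast
    then show False using nu m by simp
  qed
qed

lemma lmul_rmul: "lmul p (rmul b s) = rmul (lmul p b) s"
proof (rule ext)
  fix u
  show "lmul p (rmul b s) u = rmul (lmul p b) s u"
  proof (cases "\<exists>m. u = p @ m @ s")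
    case True
    then obtain m where "u = p @ m @ s" by blast
    then show ?thesis by (metis append.assoc lmul_append rmul_append)
  next
    case False
    have "lmul p (rmul b s) u = 0"
    proof (rule ccontr)
      assume "lmul p (rmul b s) u \<noteq> 0"
      then obtain m where m: "u = p @ m" "rmul b s m \<noteq> 0" using lmul_nonzeroD by blast
      then obtain q where "m = q @ s" using rmul_nonzeroD by blast
      then show False using False m by simp
    qed
    moreover have "rmul (lmul p b) s u = 0"
    proof (rule ccontr)
      assume "rmul (lmul p b) s u \<noteq> 0"
      then obtain m where m: "u = m @ s" "lmul p b m \<noteq> 0" using rmul_nonzeroD by blast
      then obtain q where "m = p @ q" using lmul_nonzeroD by blast
      then show False using False m by simp
    qed
    ultimately show ?thesis by simp
  qed
qed

lemma rmul_single: "rmul (single v) s = single (v @ s)"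
  by (rule rmul_eqI) (auto simp: single_def)

lemma lmul_single: "lmul p (single v) = single (p @ v)"
  by (rule lmul_eqI) (auto simp: single_def)

lemma rmul_linext: "rmul (linext F t) s u = linext (\<lambda>v. rmul (F v) s) t u"
proof (cases "\<exists>p. u = p @ s")
  case True then obtain p where "u = p @ s" by blast
  then show ?thesis by (simp add: linext_def)
next
  case False then show ?thesis by (simp add: linext_def rmul_not_suffix)
qed

lemma lmul_linext: "lmul p (linext F t) u = linext (\<lambda>v. lmul p (F v)) t u"
proof (cases "\<exists>s. u = p @ s")
  case True then obtain s where "u = p @ s" by blast
  then show ?thesis by (simp add: linext_def)
next
  case False then show ?thesis by (simp add: linext_def lmul_not_prefix)
qed

lemma rmul_eq_linext:
  assumes "fsupp a"
  shows "rmul a s = linext (\<lambda>v. single (v @ s)) a"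
proof
  fix u
  have "rmul a s u = rmul (linext single a) s u" using linext_single_self[OF assms] by simp
  then show "rmul a s u = linext (\<lambda>v. single (v @ s)) a u" by (simp add: rmul_linext rmul_single)
qed

lemma lmul_eq_linext:
  assumes "fsupp b"
  shows "lmul p b = linext (\<lambda>v. single (p @ v)) b"
proof
  fix u
  have "lmul p b u = lmul p (linext single b) u" using linext_single_self[OF assms] by simp
  then show "lmul p b u = linext (\<lambda>v. single (p @ v)) b u" by (simp add: lmul_linext lmul_single)
qed

lemma sum_drop_eq_rmul:
  "(\<Sum>j\<in>{0..length u}. if w = drop j u then a (take j u) else 0) = rmul a w u"
proof (cases "length w \<le> length u \<and> drop (length u - length w) u = w")
  case True
  then show ?thesis
    by (subst sum_eq_single_term[of _ "length u - length w"]) (auto simp: rmul_def)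
next
  case False
  then show ?thesis
    by (auto simp: rmul_def intro!: sum.neutral)
qed

lemma fsupp_rmul: "fsupp a \<Longrightarrow> fsupp (rmul a s)"
proof -
  assume "fsupp a"
  have "{u. rmul a s u \<noteq> 0} \<subseteq> (\<lambda>p. p @ s) ` {p. a p \<noteq> 0}"
    by (auto dest!: rmul_nonzeroD)
  then show ?thesis using \<open>fsupp a\<close> unfolding fsupp_def by (metis finite_imageI finite_subset)
qed

lemma fsupp_lmul: "fsupp b \<Longrightarrow> fsupp (lmul p b)"
proof -
  assume "fsupp b"
  have "{u. lmul p b u \<noteq> 0} \<subseteq> (\<lambda>s. p @ s) ` {s. b s \<noteq> 0}"
    by (auto dest!: lmul_nonzeroD)
  then show ?thesis using \<open>fsupp b\<close> unfolding fsupp_def by (metis finite_imageI finite_subset)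
qed

lemma linext_lmul_eq_concat_sum:
  assumes "fsupp a"
  shows "linext (\<lambda>v. lmul v b) a u = (\<Sum>i\<in>{0..length u}. a (take i u) * b (drop i u))"
proof -
  let ?pre = "(\<lambda>i. take i u) ` {0..length u}"
  have f: "finite (supp a \<union> ?pre)" using assms by (simp add: fsupp_iff_finite_supp)
  have "linext (\<lambda>v. lmul v b) a u = (\<Sum>v\<in>supp a \<union> ?pre. a v * lmul v b u)"
    by (rule linext_eq_sum[OF f]) auto
  also have "\<dots> = (\<Sum>v\<in>?pre. a v * lmul v b u)"
  proof (rule sum.mono_neutral_right[OF f])
    show "?pre \<subseteq> supp a \<union> ?pre" by auto
    show "\<forall>v\<in>supp a \<union> ?pre - ?pre. a v * lmul v b u = 0"
    proof
      fix v assume "v \<in> supp a \<union> ?pre - ?pre"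
      then have nv: "v \<notin> ?pre" by blast
      have "\<not> (\<exists>s. u = v @ s)"
      proof
        assume "\<exists>s. u = v @ s" then obtain s where "u = v @ s" by blast
        then have "v = take (length v) u" "length v \<in> {0..length u}" by auto
        then show False using nv by blast
      qed
      then show "a v * lmul v b u = 0" by (simp add: lmul_not_prefix)
    qed
  qed
  also have "\<dots> = (\<Sum>i\<in>{0..length u}. a (take i u) * lmul (take i u) b u)"
  proof (subst sum.reindex)
    show "inj_on (\<lambda>i. take i u) {0..length u}"
      by (auto simp: inj_on_def) (metis length_take min.absorb2)
  qed auto
  also have "\<dots> = (\<Sum>i\<in>{0..length u}. a (take i u) * b (drop i u))"
    by (intro sum.cong refl) (metis append_take_drop_id lmul_append)
  finally show ?thesis .
qed

lemma linext_rmul_eq_concat_sum: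
  assumes "fsupp b"
  shows "linext (\<lambda>v. rmul a v) b u = (\<Sum>i\<in>{0..length u}. a (take i u) * b (drop i u))"
proof -
  let ?suf = "(\<lambda>i. drop i u) ` {0..length u}"
  have f: "finite (supp b \<union> ?suf)" using assms by (simp add: fsupp_iff_finite_supp)
  have "linext (\<lambda>v. rmul a v) b u = (\<Sum>v\<in>supp b \<union> ?suf. b v * rmul a v u)"
    by (rule linext_eq_sum[OF f]) auto
  also have "\<dots> = (\<Sum>v\<in>?suf. b v * rmul a v u)"
  proof (rule sum.mono_neutral_right[OF f])
    show "?suf \<subseteq> supp b \<union> ?suf" by auto
    show "\<forall>v\<in>supp b \<union> ?suf - ?suf. b v * rmul a v u = 0"
    proof
      fix v assume "v \<in> supp b \<union> ?suf - ?suf"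
      then have nv: "v \<notin> ?suf" by blast
      have "\<not> (\<exists>p. u = p @ v)"
      proof
        assume "\<exists>p. u = p @ v" then obtain p where "u = p @ v" by blast
        then have "v = drop (length p) u" "length p \<in> {0..length u}" by auto
        then show False using nv by blast
      qed
      then show "b v * rmul a v u = 0" by (simp add: rmul_not_suffix)
    qed
  qed
  also have "\<dots> = (\<Sum>i\<in>{0..length u}. b (drop i u) * rmul a (drop i u) u)"
  proof (subst sum.reindex)
    show "inj_on (\<lambda>i. drop i u) {0..length u}"
      by (auto simp: inj_on_def) (metis diff_diff_cancel length_drop)
  qed auto
  also have "\<dots> = (\<Sum>i\<in>{0..length u}. a (take i u) * b (drop i u))"
    by (intro sum.cong refl) (metis append_take_drop_id rmul_append mult.commute)
  finally show ?thesis .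
qed

lemma linext_lmul_eq_linext_rmul:
  "fsupp a \<Longrightarrow> fsupp b \<Longrightarrow> linext (\<lambda>v. lmul v b) a u = linext (\<lambda>v. rmul a v) b u"
  by (simp add: linext_lmul_eq_concat_sum linext_rmul_eq_concat_sum)

lemma linext_letters:
  assumes "fsupp t" "finite A" "\<And>v. t v \<noteq> 0 \<Longrightarrow> G v u \<noteq> 0 \<Longrightarrow> \<exists>f\<in>A. v = [f]"
  shows "linext G t u = (\<Sum>f\<in>A. t [f] * G [f] u)"
proof -
  let ?B = "supp t \<union> (\<lambda>f. [f]) ` A"
  have fB: "finite ?B" using assms by (simp add: fsupp_iff_finite_supp)
  have "linext G t u = (\<Sum>v\<in>?B. t v * G v u)" by (rule linext_eq_sum[OF fB]) auto
  also have "\<dots> = (\<Sum>v\<in>(\<lambda>f. [f]) ` A. t v * G v u)"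
  proof (rule sum.mono_neutral_right[OF fB])
    show "\<forall>v\<in>?B - (\<lambda>f. [f]) ` A. t v * G v u = 0"
      using assms(3) by fastforce
  qed auto
  also have "\<dots> = (\<Sum>f\<in>A. t [f] * G [f] u)"
    by (subst sum.reindex) (auto simp: inj_on_def)
  finally show ?thesis .
qed

lemma linext_letters_pairs:
  assumes "fsupp t" "finite A"
    and "\<And>v. t v \<noteq> 0 \<Longrightarrow> (\<exists>f\<in>A. v = [f]) \<or> (\<exists>x\<in>A. \<exists>y\<in>A. v = [x, y])"
  shows "linext G t u = (\<Sum>f\<in>A. t [f] * G [f] u) + (\<Sum>x\<in>A. \<Sum>y\<in>A. t [x, y] * G [x, y] u)"
proof -
  let ?I1 = "(\<lambda>f. [f]) ` A" and ?I2 = "(\<lambda>(x, y). [x, y]) ` (A \<times> A)"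
  have fin: "finite (?I1 \<union> ?I2)" using assms(2) by auto
  have "linext G t u = (\<Sum>v\<in>?I1 \<union> ?I2. t v * G v u)"
    by (rule linext_eq_sum[OF fin]) (use assms(3) in \<open>force simp: supp_def\<close>)
  also have "\<dots> = (\<Sum>v\<in>?I1. t v * G v u) + (\<Sum>v\<in>?I2. t v * G v u)"
    by (rule sum.union_disjoint) (use assms(2) in auto)
  also have "(\<Sum>v\<in>?I1. t v * G v u) = (\<Sum>f\<in>A. t [f] * G [f] u)"
    by (subst sum.reindex) (auto simp: inj_on_def)
  also have "(\<Sum>v\<in>?I2. t v * G v u) = (\<Sum>p\<in>A \<times> A. t [fst p, snd p] * G [fst p, snd p] u)"
    by (subst sum.reindex) (auto simp: inj_on_def case_prod_beta intro!: sum.cong)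
  also have "\<dots> = (\<Sum>x\<in>A. \<Sum>y\<in>A. t [x, y] * G [x, y] u)"
    by (simp add: sum.cartesian_product case_prod_beta)
  finally show ?thesis .
qed

section \<open>Odd derivations of the tensor algebra\<close>

lemma psign_Nil[simp]: "psign cdim [] = 1"
  by (simp add: psign_def)

lemma psign_append: "psign cdim (p @ q) = psign cdim p * psign cdim q"
  by (auto simp: psign_def)

lemma psign_Cons: "psign cdim (x # p) = psign cdim [x] * psign cdim p"
  using psign_append[of cdim "[x]" p] by simp

lemma psign_mult_self[simp]: "psign cdim p * psign cdim p = 1"
  by (simp add: psign_def)

lemma psign_Cons_parity: "psign cdim (x # p) = (if even (cdim x) then -1 else 1) * psign cdim p"
  by (auto simp: psign_def)

lemma psign_single: "psign cdim [x] = (if even (cdim x) then -1 else 1)"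
  by (simp add: psign_def)

lemma psign_dim0: "cdim y = 0 \<Longrightarrow> psign cdim [y] = -1"
  by (simp add: psign_single)

text \<open>The derivation extending \<open>\<epsilon>\<close>, on basis words via the Leibniz rule;
  \<open>deriv\<close> is its closed form.\<close>

fun der_word :: "('c \<Rightarrow> nat) \<Rightarrow> ('c \<Rightarrow> 'c list \<Rightarrow> rat) \<Rightarrow> 'c list \<Rightarrow> 'c list \<Rightarrow> rat" where
  "der_word cdim \<epsilon> [] = (\<lambda>u. 0)"
| "der_word cdim \<epsilon> (x # w) = (\<lambda>u. rmul (\<epsilon> x) w u + psign cdim [x] * lmul [x] (der_word cdim \<epsilon> w) u)"

definition der :: "('c \<Rightarrow> nat) \<Rightarrow> ('c \<Rightarrow> 'c list \<Rightarrow> rat) \<Rightarrow> ('c list \<Rightarrow> rat) \<Rightarrow> 'c list \<Rightarrow> rat" where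
  "der cdim \<epsilon> t = linext (der_word cdim \<epsilon>) t"

lemma der_word_closed_form:
  "der_word cdim \<epsilon> v u = (\<Sum>i\<in>{0..length u}. \<Sum>j\<in>{i..length u}.
      if i < length v \<and> v = take i u @ v ! i # drop j u
      then psign cdim (take i u) * \<epsilon> (v ! i) (take (j - i) (drop i u)) else 0)"
proof (induction v arbitrary: u)
  case Nil
  then show ?case by simp
next
  case (Cons x w)
  show ?case
  proof (cases u)
    case Nil
    then show ?thesis by (simp add: rmul_def lmul_def)
  next
    case (Cons y u')
    let ?T = "\<lambda>v u i j. if i < length v \<and> v = take i u @ v ! i # drop j u
      then psign cdim (take i u) * \<epsilon> (v ! i) (take (j - i) (drop i u)) else 0"
    have L: "length u = Suc (length u')" using Cons by simp
    have "(\<Sum>i\<in>{0..length u}. \<Sum>j\<in>{i..length u}. ?T (x # w) u i j)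
        = (\<Sum>j\<in>{0..length u}. ?T (x # w) u 0 j)
          + (\<Sum>i\<in>{0..length u'}. \<Sum>j\<in>{Suc i..Suc (length u')}. ?T (x # w) u (Suc i) j)"
      unfolding L by (subst sum.atLeast0_atMost_Suc_shift) simp
    also have "(\<Sum>j\<in>{0..length u}. ?T (x # w) u 0 j) = rmul (\<epsilon> x) w u"
      by (subst sum_drop_eq_rmul[symmetric]) (auto intro!: sum.cong)
    also have "(\<Sum>i\<in>{0..length u'}. \<Sum>j\<in>{Suc i..Suc (length u')}. ?T (x # w) u (Suc i) j)
        = (\<Sum>i\<in>{0..length u'}. \<Sum>j\<in>{i..length u'}. ?T (x # w) u (Suc i) (Suc j))"
      by (subst sum.shift_bounds_cl_Suc_ivl) simp
    also have "\<dots> = (\<Sum>i\<in>{0..length u'}. \<Sum>j\<in>{i..length u'}.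
                       (if y = x then psign cdim [x] * ?T w u' i j else 0))"
      using Cons by (auto intro!: sum.cong simp: psign_Cons_parity psign_single)
    also have "\<dots> = psign cdim [x] * lmul [x] (der_word cdim \<epsilon> w) u"
      using Cons by (auto simp: lmul_def Cons.IH sum_distrib_left intro!: sum.cong)
    finally show ?thesis by simp
  qed
qed

lemma deriv_eq_der:
  assumes "fsupp t"
  shows "deriv cdim \<epsilon> t u = der cdim \<epsilon> t u"
proof -
  let ?w = "\<lambda>i j c. take i u @ c # drop j u" and ?m = "\<lambda>i j. take (j - i) (drop i u)"
  let ?T = "\<lambda>i j v. t v * (if i < length v \<and> v = ?w i j (v ! i)
                             then psign cdim (take i u) * \<epsilon> (v ! i) (?m i j) else 0)"
  have collapse: "(\<Sum>v\<in>supp t. ?T i j v)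
      = (\<Sum>c\<in>{c. t (?w i j c) \<noteq> 0}. psign cdim (take i u) * t (?w i j c) * \<epsilon> c (?m i j))"
    if "i \<le> length u" for i j
  proof -
    have inj: "inj (?w i j)" by (rule injI) simp
    have "(\<Sum>v\<in>supp t. ?T i j v) = (\<Sum>v\<in>?w i j ` {c. t (?w i j c) \<noteq> 0}. ?T i j v)"
      by (rule sum.mono_neutral_right) (use assms in \<open>auto simp: supp_def fsupp_iff_finite_supp\<close>)
    also have "\<dots> = (\<Sum>c\<in>{c. t (?w i j c) \<noteq> 0}. psign cdim (take i u) * t (?w i j c) * \<epsilon> c (?m i j))"
      by (subst sum.reindex) (use inj that in \<open>auto simp: inj_on_def nth_append intro!: sum.cong\<close>)
    finally show ?thesis .
  qed
  have "der cdim \<epsilon> t u = (\<Sum>v\<in>supp t. \<Sum>i\<in>{0..length u}. \<Sum>j\<in>{i..length u}. ?T i j v)"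
    by (simp add: der_def linext_def der_word_closed_form sum_distrib_left)
  also have "\<dots> = (\<Sum>i\<in>{0..length u}. \<Sum>j\<in>{i..length u}. \<Sum>v\<in>supp t. ?T i j v)"
    by (subst sum.swap) (simp add: sum.swap[of _ _ "supp t"])
  also have "\<dots> = deriv cdim \<epsilon> t u"
    unfolding deriv_def by (intro sum.cong refl) (simp add: collapse)
  finally show ?thesis by simp
qed

lemma deriv_cong:
  assumes "\<And>v. length v \<le> length u + 1 \<Longrightarrow> t v = t' v"
    and "\<And>c w. length w \<le> length u \<Longrightarrow> \<epsilon> c w = \<epsilon>' c w"
  shows "deriv cdim \<epsilon> t u = deriv cdim \<epsilon>' t' u"
proof -
  have inner: "(\<Sum>c\<in>{c. t (take i u @ c # drop j u) \<noteq> 0}.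
          psign cdim (take i u) * t (take i u @ c # drop j u) * \<epsilon> c (take (j - i) (drop i u))) =
        (\<Sum>c\<in>{c. t' (take i u @ c # drop j u) \<noteq> 0}.
          psign cdim (take i u) * t' (take i u @ c # drop j u) * \<epsilon>' c (take (j - i) (drop i u)))"
    if i: "i \<in> {0..length u}" and j: "j \<in> {i..length u}" for i j
  proof -
    have l: "\<And>c. length (take i u @ c # drop j u) \<le> length u + 1" using i j by auto
    have S: "{c. t (take i u @ c # drop j u) \<noteq> 0} = {c. t' (take i u @ c # drop j u) \<noteq> 0}"
      using assms(1)[OF l] by auto
    have T: "psign cdim (take i u) * t (take i u @ c # drop j u) * \<epsilon> c (take (j - i) (drop i u)) =
          psign cdim (take i u) * t' (take i u @ c # drop j u) * \<epsilon>' c (take (j - i) (drop i u))" for c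
    proof -
      have "length (take (j - i) (drop i u)) \<le> length u" by simp
      then show ?thesis using assms(1)[OF l] assms(2) by simp
    qed
    show ?thesis unfolding S T ..
  qed
  show ?thesis unfolding deriv_def
    by (rule sum.cong[OF refl], rule sum.cong[OF refl], rule inner) auto
qed

lemma der_word_add_map:
  "der_word cdim (\<lambda>c w. \<epsilon> c w + \<epsilon>' c w) v = (\<lambda>u. der_word cdim \<epsilon> v u + der_word cdim \<epsilon>' v u)"
  by (induction v) (simp_all add: rmul_add lmul_add algebra_simps)

lemma der_word_append:
  "der_word cdim \<epsilon> (v @ v') =
     (\<lambda>u. rmul (der_word cdim \<epsilon> v) v' u + psign cdim v * lmul v (der_word cdim \<epsilon> v') u)"
proof (induction v)
  case Nil
  then show ?case by simp
next
  case (Cons x v)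
  have "der_word cdim \<epsilon> ((x # v) @ v') = (\<lambda>u. rmul (\<epsilon> x) (v @ v') u + psign cdim [x] *
      lmul [x] (\<lambda>u. rmul (der_word cdim \<epsilon> v) v' u + psign cdim v * lmul v (der_word cdim \<epsilon> v') u) u)"
    using Cons by simp
  also have "\<dots> = (\<lambda>u. rmul (der_word cdim \<epsilon> (x # v)) v' u
                       + psign cdim (x # v) * lmul (x # v) (der_word cdim \<epsilon> v') u)"
    by (simp add: lmul_add lmul_scale lmul_rmul lmul_lmul rmul_add rmul_scale rmul_rmul
        psign_Cons[of cdim x v] algebra_simps)
  finally show ?case .
qed

lemma fsupp_der_word: "(\<And>c. c \<in> set v \<Longrightarrow> fsupp (\<epsilon> c)) \<Longrightarrow> fsupp (der_word cdim \<epsilon> v)"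
  by (induction v) (auto intro!: fsupp_add fsupp_scale fsupp_rmul fsupp_lmul)

lemma der_word_nonzeroD:
  "der_word cdim \<epsilon> v u \<noteq> 0 \<Longrightarrow> \<exists>p c s w. v = p @ c # s \<and> u = p @ w @ s \<and> \<epsilon> c w \<noteq> 0"
proof (induction v arbitrary: u)
  case Nil
  then show ?case by simp
next
  case (Cons x v)
  then consider "rmul (\<epsilon> x) v u \<noteq> 0" | "lmul [x] (der_word cdim \<epsilon> v) u \<noteq> 0" by force
  then show ?case
  proof cases
    case 1
    then obtain m where "u = m @ v" "\<epsilon> x m \<noteq> 0" using rmul_nonzeroD by blast
    then show ?thesis by (intro exI[of _ "[]"] exI[of _ x] exI[of _ v] exI[of _ m]) simp
  next
    case 2
    then obtain u' where u': "u = [x] @ u'" "der_word cdim \<epsilon> v u' \<noteq> 0" using lmul_nonzeroD by blast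
    obtain p c s w where "v = p @ c # s" "u' = p @ w @ s" "\<epsilon> c w \<noteq> 0" using Cons.IH[OF u'(2)] by blast
    then show ?thesis using u'(1) by (intro exI[of _ "x # p"]) auto
  qed
qed

lemma der_word_cong:
  assumes "\<And>c w. length u + 1 = length v + length w \<Longrightarrow> \<epsilon> c w = \<epsilon>' c w"
  shows "der_word cdim \<epsilon> v u = der_word cdim \<epsilon>' v u"
  unfolding der_word_closed_form
proof (intro sum.cong refl if_cong)
  fix i j assume ij: "i \<in> {0..length u}" "j \<in> {i..length u}"
    and "i < length v \<and> v = take i u @ v ! i # drop j u"
  then have "length v = length (take i u @ v ! i # drop j u)" by (metis arg_cong)
  then have "length u + 1 = length v + length (take (j - i) (drop i u))" using ij by auto
  then show "psign cdim (take i u) * \<epsilon> (v ! i) (take (j - i) (drop i u))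
      = psign cdim (take i u) * \<epsilon>' (v ! i) (take (j - i) (drop i u))"
    using assms by simp
qed

lemma der_add: "fsupp t \<Longrightarrow> fsupp t' \<Longrightarrow> der cdim \<epsilon> (\<lambda>u. t u + t' u) u = der cdim \<epsilon> t u + der cdim \<epsilon> t' u"
  by (simp add: der_def linext_add)

lemma der_scale: "der cdim \<epsilon> (\<lambda>u. a * t u) u = a * der cdim \<epsilon> t u"
  by (simp add: der_def linext_scale)

lemma der_sum: "finite I \<Longrightarrow> (\<And>i. i \<in> I \<Longrightarrow> fsupp (t i)) \<Longrightarrow>
    der cdim \<epsilon> (\<lambda>u. \<Sum>i\<in>I. t i u) u = (\<Sum>i\<in>I. der cdim \<epsilon> (t i) u)"
  by (simp add: der_def linext_sum)

lemma der_neg: "der cdim \<epsilon> (\<lambda>u. - t u) u = - der cdim \<epsilon> t u"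
  by (simp add: der_def linext_def supp_def sum_negf)

lemma der_diff:
  assumes "fsupp t" "fsupp t'"
  shows "der cdim \<epsilon> (\<lambda>u. t u - t' u) u = der cdim \<epsilon> t u - der cdim \<epsilon> t' u"
  using der_add[OF assms(1) fsupp_neg[OF assms(2)], of cdim \<epsilon> u] by (simp add: der_neg)

lemma der_add_map: "der cdim (\<lambda>c w. \<epsilon> c w + \<epsilon>' c w) t u = der cdim \<epsilon> t u + der cdim \<epsilon>' t u"
  unfolding der_def der_word_add_map by (rule linext_fun_add)

lemma der_zero[simp]: "der cdim \<epsilon> (\<lambda>_. 0) = (\<lambda>_. 0)"
  by (simp add: der_def)

lemma der_single: "der cdim \<epsilon> (single v) = der_word cdim \<epsilon> v"
  by (simp add: der_def linext_single)

lemma der_nonzeroD: "der cdim \<epsilon> t u \<noteq> 0 \<Longrightarrow> \<exists>v p c s w. t v \<noteq> 0 \<and> v = p @ c # s \<and> u = p @ w @ s \<and> \<epsilon> c w \<noteq> 0"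
  unfolding der_def by (drule linext_nonzeroD) (blast dest: der_word_nonzeroD)

lemma der_cong_map:
  assumes "\<And>v c w. t v \<noteq> 0 \<Longrightarrow> length u + 1 = length v + length w \<Longrightarrow> \<epsilon> c w = \<epsilon>' c w"
  shows "der cdim \<epsilon> t u = der cdim \<epsilon>' t u"
  unfolding der_def by (rule linext_fun_cong) (rule der_word_cong, rule assms)

lemma der_cong:
  assumes "fsupp t" "fsupp t'"
    and "\<And>v c w. \<epsilon> c w \<noteq> 0 \<Longrightarrow> length u + 1 = length v + length w \<Longrightarrow> t v = t' v"
  shows "der cdim \<epsilon> t u = der cdim \<epsilon> t' u"
  unfolding der_def
proof (rule linext_arg_cong[OF _ assms(1,2)])
  fix v assume "der_word cdim \<epsilon> v u \<noteq> 0"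
  then obtain p c s w where "v = p @ c # s \<and> u = p @ w @ s \<and> \<epsilon> c w \<noteq> 0" using der_word_nonzeroD by blast
  then show "t v = t' v" using assms(3)[of c w v] by auto
qed

lemma fsupp_der: "fsupp t \<Longrightarrow> (\<And>c. fsupp (\<epsilon> c)) \<Longrightarrow> fsupp (der cdim \<epsilon> t)"
  unfolding der_def by (rule fsupp_linext) (auto intro: fsupp_der_word)

lemma der_linext: "fsupp t \<Longrightarrow> (\<And>v. t v \<noteq> 0 \<Longrightarrow> fsupp (F v)) \<Longrightarrow>
    der cdim \<epsilon> (linext F t) u = linext (\<lambda>v. der cdim \<epsilon> (F v)) t u"
  unfolding der_def by (rule linext_linext)

lemma der_rmul:
  assumes "fsupp a"
  shows "der cdim \<epsilon> (rmul a s) u = rmul (der cdim \<epsilon> a) s u + linext (\<lambda>v u. psign cdim v * lmul v (der_word cdim \<epsilon> s) u) a u"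
proof -
  have "der cdim \<epsilon> (rmul a s) u = linext (\<lambda>v. der cdim \<epsilon> (single (v @ s))) a u"
    unfolding rmul_eq_linext[OF assms] by (rule der_linext[OF assms]) simp
  also have "\<dots> = linext (\<lambda>v u. rmul (der_word cdim \<epsilon> v) s u + psign cdim v * lmul v (der_word cdim \<epsilon> s) u) a u"
    by (simp add: der_single der_word_append)
  also have "\<dots> = linext (\<lambda>v. rmul (der_word cdim \<epsilon> v) s) a u + linext (\<lambda>v u. psign cdim v * lmul v (der_word cdim \<epsilon> s) u) a u"
    by (rule linext_fun_add)
  also have "linext (\<lambda>v. rmul (der_word cdim \<epsilon> v) s) a u = rmul (der cdim \<epsilon> a) s u"
    by (simp add: der_def rmul_linext)
  finally show ?thesis .
qed

lemma der_lmul: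
  assumes "fsupp b"
  shows "der cdim \<epsilon> (lmul p b) u = linext (\<lambda>v. rmul (der_word cdim \<epsilon> p) v) b u + psign cdim p * lmul p (der cdim \<epsilon> b) u"
proof -
  have "der cdim \<epsilon> (lmul p b) u = linext (\<lambda>v. der cdim \<epsilon> (single (p @ v))) b u"
    unfolding lmul_eq_linext[OF assms] by (rule der_linext[OF assms]) simp
  also have "\<dots> = linext (\<lambda>v u. rmul (der_word cdim \<epsilon> p) v u + psign cdim p * lmul p (der_word cdim \<epsilon> v) u) b u"
    by (simp add: der_single der_word_append)
  also have "\<dots> = linext (\<lambda>v. rmul (der_word cdim \<epsilon> p) v) b u + linext (\<lambda>v u. psign cdim p * lmul p (der_word cdim \<epsilon> v) u) b u"
    by (rule linext_fun_add)
  also have "linext (\<lambda>v u. psign cdim p * lmul p (der_word cdim \<epsilon> v) u) b u = psign cdim p * lmul p (der cdim \<epsilon> b) u"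
    by (simp add: linext_fun_scale der_def lmul_linext)
  finally show ?thesis .
qed

definition der_sq_word :: "('c \<Rightarrow> nat) \<Rightarrow> ('c \<Rightarrow> 'c list \<Rightarrow> rat) \<Rightarrow> 'c list \<Rightarrow> 'c list \<Rightarrow> rat" where
  "der_sq_word cdim \<epsilon> v = der cdim \<epsilon> (der_word cdim \<epsilon> v)"

definition odd_map :: "('c \<Rightarrow> nat) \<Rightarrow> ('c \<Rightarrow> 'c list \<Rightarrow> rat) \<Rightarrow> bool" where
  "odd_map cdim \<epsilon> \<longleftrightarrow> (\<forall>c. fsupp (\<epsilon> c)) \<and> (\<forall>c w. \<epsilon> c w \<noteq> 0 \<longrightarrow> psign cdim w = - psign cdim [c])"

lemma der_sq_word_single: "der_sq_word cdim \<epsilon> [c] = der cdim \<epsilon> (\<epsilon> c)"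
  by (simp add: der_sq_word_def)

lemma der_sq_word_Nil[simp]: "der_sq_word cdim \<epsilon> [] = (\<lambda>_. 0)"
  by (simp add: der_sq_word_def)

text \<open>For odd \<open>\<epsilon>\<close> the cross terms \<open>\<plusminus>\<epsilon>(x) D(w)\<close> cancel: \<open>D\<^sup>2\<close> is again a derivation.\<close>

lemma der_sq_word_Cons:
  assumes "odd_map cdim \<epsilon>"
  shows "der_sq_word cdim \<epsilon> (x # w) u = rmul (der_sq_word cdim \<epsilon> [x]) w u + lmul [x] (der_sq_word cdim \<epsilon> w) u"
proof -
  have fe: "\<And>c. fsupp (\<epsilon> c)" and par: "\<And>c w. \<epsilon> c w \<noteq> 0 \<Longrightarrow> psign cdim w = - psign cdim [c]"
    using assms by (auto simp: odd_map_def)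
  have fw: "fsupp (der_word cdim \<epsilon> w)" by (rule fsupp_der_word) (rule fe)
  let ?s = "psign cdim [x]"
  let ?M = "linext (\<lambda>v. rmul (\<epsilon> x) v) (der_word cdim \<epsilon> w) u"
  have "der_sq_word cdim \<epsilon> (x # w) u = der cdim \<epsilon> (rmul (\<epsilon> x) w) u + ?s * der cdim \<epsilon> (lmul [x] (der_word cdim \<epsilon> w)) u"
    unfolding der_sq_word_def der_word.simps
    by (subst der_add) (auto intro!: fsupp_rmul fsupp_scale fsupp_lmul fe fw simp: der_scale)
  also have "der cdim \<epsilon> (rmul (\<epsilon> x) w) u = rmul (der_sq_word cdim \<epsilon> [x]) w u - ?s * ?M"
  proof -
    have "linext (\<lambda>v u. psign cdim v * lmul v (der_word cdim \<epsilon> w) u) (\<epsilon> x) u = linext (\<lambda>v u. - ?s * lmul v (der_word cdim \<epsilon> w) u) (\<epsilon> x) u"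
      by (rule linext_fun_cong) (simp add: par)
    also have "\<dots> = - ?s * linext (\<lambda>v. lmul v (der_word cdim \<epsilon> w)) (\<epsilon> x) u"
      by (rule linext_fun_scale)
    also have "linext (\<lambda>v. lmul v (der_word cdim \<epsilon> w)) (\<epsilon> x) u = ?M"
      by (rule linext_lmul_eq_linext_rmul[OF fe fw])
    finally show ?thesis by (simp add: der_rmul[OF fe] der_sq_word_def)
  qed
  also have "der cdim \<epsilon> (lmul [x] (der_word cdim \<epsilon> w)) u = ?M + ?s * lmul [x] (der_sq_word cdim \<epsilon> w) u"
    by (simp add: der_lmul[OF fw] der_sq_word_def)
  finally have "der_sq_word cdim \<epsilon> (x # w) u = (rmul (der_sq_word cdim \<epsilon> [x]) w u - ?s * ?M) + ?s * (?M + ?s * lmul [x] (der_sq_word cdim \<epsilon> w) u)" .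
  also have "\<dots> = rmul (der_sq_word cdim \<epsilon> [x]) w u + (?s * ?s) * lmul [x] (der_sq_word cdim \<epsilon> w) u"
    by (simp only: ring_distribs mult.assoc)
  finally show ?thesis by simp
qed

lemma der_sq_word_length:
  assumes "odd_map cdim \<epsilon>" "\<And>x u. length u < k \<Longrightarrow> der_sq_word cdim \<epsilon> [x] u = 0"
  shows "der_sq_word cdim \<epsilon> v u \<noteq> 0 \<Longrightarrow> length v + k \<le> length u + 1"
proof (induction v arbitrary: u)
  case Nil
  then show ?case by simp
next
  case (Cons x w)
  then have "rmul (der_sq_word cdim \<epsilon> [x]) w u \<noteq> 0 \<or> lmul [x] (der_sq_word cdim \<epsilon> w) u \<noteq> 0"
    using der_sq_word_Cons[OF assms(1)] by auto
  then show ?case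
  proof
    assume "rmul (der_sq_word cdim \<epsilon> [x]) w u \<noteq> 0"
    then obtain m where "u = m @ w" "der_sq_word cdim \<epsilon> [x] m \<noteq> 0" using rmul_nonzeroD by blast
    have "\<not> length m < k" using assms(2)[of m x] \<open>der_sq_word cdim \<epsilon> [x] m \<noteq> 0\<close> by blast
    then show ?thesis using \<open>u = m @ w\<close> by simp
  next
    assume "lmul [x] (der_sq_word cdim \<epsilon> w) u \<noteq> 0"
    then obtain u' where u': "u = [x] @ u'" "der_sq_word cdim \<epsilon> w u' \<noteq> 0" using lmul_nonzeroD by blast
    have "length w + k \<le> length u' + 1" using Cons.IH u'(2) by blast
    then show ?thesis using u'(1) by simp
  qed
qed

section \<open>The cellular boundary as a derivation\<close>

definition chain_tensor :: "('c \<Rightarrow> rat) \<Rightarrow> 'c list \<Rightarrow> rat" where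
  "chain_tensor z = (\<lambda>v. if length v = 1 then z (v ! 0) else 0)"

lemma chain_tensor_single[simp]: "chain_tensor z [x] = z x"
  by (simp add: chain_tensor_def)

lemma chain_tensor_nonzeroD: "chain_tensor z v \<noteq> 0 \<Longrightarrow> \<exists>x. v = [x] \<and> z x \<noteq> 0"
  by (cases v) (auto simp: chain_tensor_def split: if_splits)

lemma fsupp_chain_tensor: "fsupp z \<Longrightarrow> fsupp (chain_tensor z)"
proof -
  assume "fsupp z"
  have "{v. chain_tensor z v \<noteq> 0} \<subseteq> (\<lambda>x. [x]) ` {x. z x \<noteq> 0}"
    by (auto dest!: chain_tensor_nonzeroD)
  then show ?thesis using \<open>fsupp z\<close> unfolding fsupp_def by (meson finite_imageI finite_subset)
qed

lemma single_eq_chain_tensor: "single [c] = chain_tensor (\<lambda>x. if x = c then 1 else 0)"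
  by (rule ext) (auto simp: single_def chain_tensor_def length_Suc_conv)

lemma chain_bd_scale: "chain_bd bd (\<lambda>x. a * z x) f = a * chain_bd bd z f"
proof (cases "a = 0")
  case True
  then show ?thesis by (simp add: chain_bd_def)
next
  case False
  then have "{e. a * z e \<noteq> 0} = {e. z e \<noteq> 0}" by auto
  then show ?thesis by (simp add: chain_bd_def sum_distrib_left mult.assoc)
qed

locale cell_chain_complex =
  fixes cdim :: "'c \<Rightarrow> nat" and bd :: "'c \<Rightarrow> 'c \<Rightarrow> rat" and cl :: "'c \<Rightarrow> 'c set"
  assumes cell_complex: "cell_complex cdim bd cl"
begin

lemma cl_self: "e \<in> cl e" and finite_cl: "finite (cl e)"
  and cl_mono: "f \<in> cl e \<Longrightarrow> cl f \<subseteq> cl e"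
  and cl_dim_less: "f \<in> cl e \<Longrightarrow> f \<noteq> e \<Longrightarrow> cdim f < cdim e"
  and bd_nonzeroD: "bd e f \<noteq> 0 \<Longrightarrow> f \<in> cl e \<and> cdim f + 1 = cdim e"
  and bd_bd: "(\<Sum>f\<in>cl e. bd e f * bd f g) = 0"
  using cell_complex unfolding cell_complex_def by blast+

lemma cl_dim0: "cdim e = 0 \<Longrightarrow> cl e = {e}"
  using cl_self cl_dim_less by fastforce

lemma bd_dim0: "cdim e = 0 \<Longrightarrow> bd e f = 0"
  using bd_nonzeroD by fastforce

lemma bd_bd_sum: "(\<Sum>f\<in>cl c. bd c f * (\<Sum>g\<in>cl f. bd f g * X g)) = 0"
proof -
  have "(\<Sum>f\<in>cl c. bd c f * (\<Sum>g\<in>cl f. bd f g * X g)) = (\<Sum>f\<in>cl c. \<Sum>g\<in>cl c. bd c f * bd f g * X g)"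
  proof (rule sum.cong[OF refl])
    fix f assume "f \<in> cl c"
    then have "(\<Sum>g\<in>cl f. bd f g * X g) = (\<Sum>g\<in>cl c. bd f g * X g)"
      by (intro sum.mono_neutral_left finite_cl cl_mono) (auto dest: bd_nonzeroD)
    then show "bd c f * (\<Sum>g\<in>cl f. bd f g * X g) = (\<Sum>g\<in>cl c. bd c f * bd f g * X g)"
      by (simp add: sum_distrib_left mult.assoc)
  qed
  also have "\<dots> = (\<Sum>g\<in>cl c. (\<Sum>f\<in>cl c. bd c f * bd f g) * X g)"
    by (subst sum.swap) (simp add: sum_distrib_right)
  also have "\<dots> = 0" by (simp add: bd_bd)
  finally show ?thesis .
qed

lemma bd_sum_cong:
  assumes "\<And>f. cdim f < cdim c \<Longrightarrow> G f = G' f"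
  shows "(\<Sum>f\<in>cl c. bd c f * G f u) = (\<Sum>f\<in>cl c. bd c f * G' f u)"
  by (rule sum.cong[OF refl]) (metis assms bd_nonzeroD less_add_one mult_eq_0_iff)

definition bd_map :: "'c \<Rightarrow> 'c list \<Rightarrow> rat" where
  "bd_map c w = (if length w = 1 then bd c (w ! 0) else 0)"

abbreviation bd_der :: "('c list \<Rightarrow> rat) \<Rightarrow> 'c list \<Rightarrow> rat" where
  "bd_der \<equiv> der cdim bd_map"

lemma bd_map_nonzeroD: "bd_map c w \<noteq> 0 \<Longrightarrow> \<exists>f. w = [f] \<and> bd c f \<noteq> 0"
  by (cases w) (auto simp: bd_map_def split: if_splits)

lemma bd_map_eq_sum: "bd_map c u = (\<Sum>f\<in>cl c. bd c f * single [f] u)"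
proof (cases "\<exists>f. u = [f]")
  case True
  then obtain f where u: "u = [f]" by blast
  have "(\<Sum>g\<in>cl c. bd c g * single [g] u) = (\<Sum>g\<in>cl c. if g = f then bd c g else 0)"
    using u by (intro sum.cong) (auto simp: single_def)
  also have "\<dots> = bd c f"
    using finite_cl bd_nonzeroD by auto
  finally show ?thesis using u by (simp add: bd_map_def)
next
  case False
  then show ?thesis
    by (auto simp: bd_map_def single_def length_Suc_conv intro!: sum.neutral)
qed

lemma fsupp_bd_map: "fsupp (bd_map c)"
  by (subst bd_map_eq_sum[abs_def]) (auto intro!: fsupp_sum fsupp_scale finite_cl)

lemma bd_map_dim0: "cdim c = 0 \<Longrightarrow> bd_map c = (\<lambda>_. 0)"
  by (rule ext) (auto simp: bd_map_def bd_dim0)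

lemma odd_map_bd_map: "odd_map cdim bd_map"
  unfolding odd_map_def
proof (intro conjI allI impI)
  fix c show "fsupp (bd_map c)" by (rule fsupp_bd_map)
next
  fix c w assume "bd_map c w \<noteq> 0"
  then obtain f where "w = [f]" "cdim c = Suc (cdim f)" using bd_map_nonzeroD bd_nonzeroD by force
  then show "psign cdim w = - psign cdim [c]" by (simp add: psign_single)
qed

lemma der_bd_map: "der cdim F (bd_map x) u = (\<Sum>f\<in>cl x. bd x f * F f u)"
proof -
  have "der cdim F (bd_map x) u = (\<Sum>f\<in>cl x. bd_map x [f] * der_word cdim F [f] u)"
    unfolding der_def
    by (rule linext_letters[OF fsupp_bd_map finite_cl]) (use bd_map_nonzeroD bd_nonzeroD in blast)
  then show ?thesis by (simp add: bd_map_def)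
qed

lemma der_sq_word_bd_map: "der_sq_word cdim bd_map v u = 0"
proof -
  have generator: "der_sq_word cdim bd_map [x] u' = 0" for x u'
  proof -
    have "der_sq_word cdim bd_map [x] u' = (\<Sum>f\<in>cl x. bd x f * bd_map f u')"
      by (simp add: der_sq_word_def der_bd_map)
    also have "\<dots> = 0"
      by (cases "length u' = 1") (simp_all add: bd_map_def bd_bd)
    finally show ?thesis .
  qed
  show ?thesis
  proof (rule ccontr)
    assume "der_sq_word cdim bd_map v u \<noteq> 0"
    then have "length v + (length u + 2) \<le> length u + 1"
      by (rule der_sq_word_length[OF odd_map_bd_map, rotated]) (rule generator)
    then show False by simp
  qed
qed

lemma bd_der_bd_der: "fsupp t \<Longrightarrow> bd_der (bd_der t) u = 0"
  unfolding der_def[of cdim bd_map t]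
  by (subst der_linext)
    (auto intro: fsupp_der_word fsupp_bd_map simp: der_sq_word_bd_map der_sq_word_def[symmetric] linext_def)

lemma bd_der_chain_tensor: "fsupp z \<Longrightarrow> bd_der (chain_tensor z) = chain_tensor (chain_bd bd z)"
proof
  fix u assume fz: "fsupp z"
  have "bd_der (chain_tensor z) u = (\<Sum>x\<in>{x. z x \<noteq> 0}. chain_tensor z [x] * der_word cdim bd_map [x] u)"
    unfolding der_def
    by (rule linext_letters[OF fsupp_chain_tensor[OF fz]])
      (use fz in \<open>auto simp: fsupp_def dest!: chain_tensor_nonzeroD\<close>)
  also have "\<dots> = chain_tensor (chain_bd bd z) u"
    by (auto simp: chain_tensor_def chain_bd_def bd_map_def)
  finally show "bd_der (chain_tensor z) u = chain_tensor (chain_bd bd z) u" .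
qed

lemma chain_tensor_in:
  assumes "z \<in> chains_in cdim S n"
  shows "fsupp (chain_tensor z)" "\<And>v. chain_tensor z v \<noteq> 0 \<Longrightarrow> \<exists>y. v = [y] \<and> y \<in> S \<and> cdim y = n"
  using assms
  by (auto simp: chains_in_def supported_in_def homogeneous_def intro: fsupp_chain_tensor dest!: chain_tensor_nonzeroD)

lemma chain_of_tensor:
  assumes "fsupp r" "\<And>v. r v \<noteq> 0 \<Longrightarrow> \<exists>y. v = [y] \<and> y \<in> S \<and> cdim y = n"
  shows "(\<lambda>x. r [x]) \<in> chains_in cdim S n" "chain_tensor (\<lambda>x. r [x]) = r"
proof -
  have "{x. r [x] \<noteq> 0} = (\<lambda>x. [x]) -` {v. r v \<noteq> 0}" by auto
  then have "finite {x. r [x] \<noteq> 0}" using assms(1) unfolding fsupp_def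
    by (metis finite_vimageI inj_def list.inject)
  then show "(\<lambda>x. r [x]) \<in> chains_in cdim S n"
    using assms(2) by (auto simp: chains_in_def fsupp_def supported_in_def homogeneous_def)
  show "chain_tensor (\<lambda>x. r [x]) = r"
  proof
    fix v
    show "chain_tensor (\<lambda>x. r [x]) v = r v"
      using assms(2)[of v] by (cases v) (auto simp: chain_tensor_def)
  qed
qed

end

section \<open>Acyclicity of tensor powers of a contractible subcomplex\<close>

context cell_chain_complex
begin

definition tensor_in :: "'c set \<Rightarrow> nat \<Rightarrow> nat \<Rightarrow> ('c list \<Rightarrow> rat) \<Rightarrow> bool" where
  "tensor_in S k m z \<longleftrightarrow>
     fsupp z \<and> (\<forall>v. z v \<noteq> 0 \<longrightarrow> length v = k \<and> set v \<subseteq> S \<and> sum_list (map cdim v) = m)"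

lemma tensor_in_diff:
  assumes "tensor_in S k m a" "tensor_in S k m b"
  shows "tensor_in S k m (\<lambda>u. a u - b u)"
proof -
  have "a u - b u \<noteq> 0 \<Longrightarrow> a u \<noteq> 0 \<or> b u \<noteq> 0" for u by auto
  then show ?thesis using assms unfolding tensor_in_def by (blast intro: fsupp_diff)
qed

end

text \<open>\<open>H\<close> is a chain homotopy from the identity of the chains of \<open>S\<close> to the projection
  \<open>x \<mapsto> P x \<cdot> z0\<close> onto a \<open>0\<close>-cycle \<open>z0\<close> (chains being tensors of length one).\<close>

locale contracting_homotopy = cell_chain_complex cdim bd cl
  for cdim :: "'c \<Rightarrow> nat" and bd :: "'c \<Rightarrow> 'c \<Rightarrow> rat" and cl :: "'c \<Rightarrow> 'c set" +
  fixes S :: "'c set" and z0 :: "'c list \<Rightarrow> rat" and P :: "'c \<Rightarrow> rat" and H :: "'c \<Rightarrow> 'c list \<Rightarrow> rat"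
  assumes fsupp_z0: "fsupp z0"
    and z0_nonzero: "\<exists>y0. z0 [y0] \<noteq> 0"
    and z0_nonzeroD: "z0 v \<noteq> 0 \<Longrightarrow> \<exists>y. v = [y] \<and> y \<in> S \<and> cdim y = 0"
    and fsupp_H: "x \<in> S \<Longrightarrow> fsupp (H x)"
    and H_nonzeroD: "x \<in> S \<Longrightarrow> H x v \<noteq> 0 \<Longrightarrow> \<exists>y. v = [y] \<and> y \<in> S \<and> cdim y = cdim x + 1"
    and P_nonzeroD: "x \<in> S \<Longrightarrow> P x \<noteq> 0 \<Longrightarrow> cdim x = 0"
    and homotopy: "x \<in> S \<Longrightarrow>
      bd_der (H x) u + (\<Sum>f\<in>cl x. bd x f * H f u) = single [x] u - P x * z0 u"
begin

definition z0_tensor :: "('c list \<Rightarrow> rat) \<Rightarrow> 'c list \<Rightarrow> rat" where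
  "z0_tensor b = linext (\<lambda>v. lmul v b) z0"

definition proj_first :: "('c list \<Rightarrow> rat) \<Rightarrow> 'c list \<Rightarrow> rat" where
  "proj_first z = linext (\<lambda>v u. P (hd v) * single (tl v) u) z"

fun htpy_word :: "'c list \<Rightarrow> 'c list \<Rightarrow> rat" where
  "htpy_word [] = (\<lambda>_. 0)"
| "htpy_word (x # w) = rmul (H x) w"

definition htpy :: "('c list \<Rightarrow> rat) \<Rightarrow> 'c list \<Rightarrow> rat" where
  "htpy z = linext htpy_word z"

lemma fsupp_z0_tensor: "fsupp b \<Longrightarrow> fsupp (z0_tensor b)"
  unfolding z0_tensor_def by (rule fsupp_linext[OF fsupp_z0]) (rule fsupp_lmul)

lemma bd_der_z0_tensor:
  assumes "fsupp b"
  shows "bd_der (z0_tensor b) u = - z0_tensor (bd_der b) u"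
proof -
  have "bd_der (z0_tensor b) u = linext (\<lambda>v. bd_der (lmul v b)) z0 u"
    unfolding z0_tensor_def by (rule der_linext[OF fsupp_z0]) (rule fsupp_lmul[OF assms])
  also have "\<dots> = linext (\<lambda>v u. - lmul v (bd_der b) u) z0 u"
  proof (rule linext_fun_cong)
    fix v assume "z0 v \<noteq> 0"
    then obtain y where y: "v = [y]" "cdim y = 0" using z0_nonzeroD by blast
    then show "bd_der (lmul v b) u = - lmul v (bd_der b) u"
      using der_lmul[OF assms, of cdim bd_map v u] by (simp add: bd_map_dim0 psign_dim0 linext_fun_zero)
  qed
  finally show ?thesis by (simp add: linext_fun_neg z0_tensor_def)
qed

lemma z0_tensor_cancel:
  assumes "\<And>u. z0_tensor c u = 0"
  shows "c w = 0"
proof -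
  obtain y0 where y0: "z0 [y0] \<noteq> 0" using z0_nonzero by blast
  have "z0_tensor c (y0 # w) = (\<Sum>f\<in>{y0}. z0 [f] * lmul [f] c (y0 # w))"
    unfolding z0_tensor_def
  proof (rule linext_letters[OF fsupp_z0])
    fix v assume "z0 v \<noteq> 0" "lmul v c (y0 # w) \<noteq> 0"
    then show "\<exists>f\<in>{y0}. v = [f]" using z0_nonzeroD lmul_nonzeroD by fastforce
  qed simp
  then have "z0 [y0] * c w = 0" using assms[of "y0 # w"] lmul_append[of "[y0]" c w] by simp
  then show ?thesis using y0 by simp
qed

lemma bd_der_htpy_word_Cons:
  assumes "x \<in> S"
  shows "bd_der (htpy_word (x # w)) u
    = rmul (bd_der (H x)) w u - psign cdim [x] * linext (\<lambda>v. lmul v (der_word cdim bd_map w)) (H x) u"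
proof -
  have "linext (\<lambda>v u. psign cdim v * lmul v (der_word cdim bd_map w) u) (H x) u
      = linext (\<lambda>v u. - psign cdim [x] * lmul v (der_word cdim bd_map w) u) (H x) u"
  proof (rule linext_fun_cong)
    fix v assume "H x v \<noteq> 0"
    then obtain y where "v = [y]" "cdim y = Suc (cdim x)" using H_nonzeroD[OF assms] by force
    then show "psign cdim v * lmul v (der_word cdim bd_map w) u
        = - psign cdim [x] * lmul v (der_word cdim bd_map w) u"
      by (simp add: psign_single)
  qed
  then show ?thesis by (simp add: der_rmul[OF fsupp_H[OF assms]] linext_fun_neg linext_fun_scale)
qed

lemma htpy_der_word_Cons:
  assumes "x \<in> S"
  shows "linext htpy_word (der_word cdim bd_map (x # w)) u
    = (\<Sum>f\<in>cl x. bd x f * rmul (H f) w u) + psign cdim [x] * linext (\<lambda>v. lmul v (der_word cdim bd_map w)) (H x) u"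
proof -
  have fw: "fsupp (der_word cdim bd_map w)" by (rule fsupp_der_word) (rule fsupp_bd_map)
  have "linext htpy_word (rmul (bd_map x) w) u = linext (\<lambda>v. linext htpy_word (single (v @ w))) (bd_map x) u"
    unfolding rmul_eq_linext[OF fsupp_bd_map] by (rule linext_linext[OF fsupp_bd_map]) simp
  also have "\<dots> = (\<Sum>f\<in>cl x. bd_map x [f] * linext htpy_word (single ([f] @ w)) u)"
    by (rule linext_letters[OF fsupp_bd_map finite_cl]) (use bd_map_nonzeroD bd_nonzeroD in blast)
  finally have first: "linext htpy_word (rmul (bd_map x) w) u = (\<Sum>f\<in>cl x. bd x f * rmul (H f) w u)"
    by (simp add: linext_single bd_map_def)
  have "linext htpy_word (lmul [x] (der_word cdim bd_map w)) u
      = linext (\<lambda>v. linext htpy_word (single ([x] @ v))) (der_word cdim bd_map w) u"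
    unfolding lmul_eq_linext[OF fw] by (rule linext_linext[OF fw]) simp
  also have "\<dots> = linext (\<lambda>v. lmul v (der_word cdim bd_map w)) (H x) u"
    by (simp add: linext_single linext_lmul_eq_linext_rmul[OF fsupp_H[OF assms] fw])
  finally have second: "linext htpy_word (lmul [x] (der_word cdim bd_map w)) u
      = linext (\<lambda>v. lmul v (der_word cdim bd_map w)) (H x) u" .
  have "linext htpy_word (der_word cdim bd_map (x # w)) u
      = linext htpy_word (rmul (bd_map x) w) u
        + linext htpy_word (\<lambda>u. psign cdim [x] * lmul [x] (der_word cdim bd_map w) u) u"
    unfolding der_word.simps by (rule linext_add) (auto intro!: fsupp_rmul fsupp_bd_map fsupp_scale fsupp_lmul fw)
  then show ?thesis by (simp add: first second linext_scale)
qed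

lemma bd_der_htpy_word:
  assumes "x \<in> S"
  shows "bd_der (htpy_word (x # w)) u + linext htpy_word (der_word cdim bd_map (x # w)) u
    = single (x # w) u - P x * rmul z0 w u"
proof -
  have "bd_der (htpy_word (x # w)) u + linext htpy_word (der_word cdim bd_map (x # w)) u
      = rmul (\<lambda>u. bd_der (H x) u + (\<Sum>f\<in>cl x. bd x f * H f u)) w u"
    by (simp only: bd_der_htpy_word_Cons[OF assms] htpy_der_word_Cons[OF assms])
      (simp add: rmul_add rmul_sum_fun rmul_scale)
  also have "\<dots> = rmul (\<lambda>u. single [x] u + (- P x * z0 u)) w u"
    by (simp add: homotopy[OF assms])
  finally show ?thesis
    using rmul_add[of "single [x]" "\<lambda>u. - P x * z0 u" w] rmul_scale[of "- P x" z0 w] rmul_single[of "[x]" w]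
    by simp
qed

lemma bd_der_htpy_cycle:
  assumes fz: "fsupp z" and z: "\<And>v. z v \<noteq> 0 \<Longrightarrow> v \<noteq> [] \<and> hd v \<in> S" and cycle: "bd_der z = (\<lambda>_. 0)"
  shows "bd_der (htpy z) u = z u - z0_tensor (proj_first z) u"
proof -
  have fK: "fsupp (htpy_word v)" if "z v \<noteq> 0" for v
    using z[OF that] fsupp_H by (cases v) (auto intro: fsupp_rmul)
  have "linext (\<lambda>v. linext htpy_word (der_word cdim bd_map v)) z u = linext htpy_word (bd_der z) u"
    unfolding der_def[of cdim bd_map z]
    by (rule linext_linext[OF fz, symmetric]) (rule fsupp_der_word, rule fsupp_bd_map)
  then have "bd_der (htpy z) u
      = linext (\<lambda>v u. bd_der (htpy_word v) u + linext htpy_word (der_word cdim bd_map v) u) z u"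
    by (simp add: htpy_def der_linext[OF fz fK] linext_fun_add cycle)
  also have "\<dots> = linext (\<lambda>v u. single v u - P (hd v) * rmul z0 (tl v) u) z u"
    by (rule linext_fun_cong) (metis bd_der_htpy_word list.collapse list.sel z)
  also have "\<dots> = z u - linext (\<lambda>v u. P (hd v) * rmul z0 (tl v) u) z u"
    by (simp add: linext_fun_diff linext_single_self[OF fz])
  also have "linext (\<lambda>v u. P (hd v) * rmul z0 (tl v) u) z u = z0_tensor (proj_first z) u"
  proof -
    have "z0_tensor (proj_first z) u = linext (\<lambda>v. rmul z0 v) (proj_first z) u"
      unfolding z0_tensor_def
      by (rule linext_lmul_eq_linext_rmul[OF fsupp_z0])
        (unfold proj_first_def, rule fsupp_linext[OF fz], auto intro: fsupp_scale)
    also have "\<dots> = linext (\<lambda>v. linext (\<lambda>w. rmul z0 w) (\<lambda>u. P (hd v) * single (tl v) u)) z u"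
      unfolding proj_first_def by (rule linext_linext[OF fz]) (auto intro: fsupp_scale)
    also have "\<dots> = linext (\<lambda>v u. P (hd v) * rmul z0 (tl v) u) z u"
      by (rule linext_fun_cong) (simp add: linext_scale linext_single)
    finally show ?thesis ..
  qed
  finally show ?thesis .
qed

lemma tensor_in_proj_first:
  assumes "tensor_in S (Suc k) m z"
  shows "tensor_in S k m (proj_first z)"
  unfolding tensor_in_def
proof (intro conjI[of "fsupp _"] allI impI)
  show "fsupp (proj_first z)"
    unfolding proj_first_def using assms
    by (intro fsupp_linext) (auto simp: tensor_in_def intro: fsupp_scale)
next
  fix w assume "proj_first z w \<noteq> 0"
  then obtain v where v: "z v \<noteq> 0" "P (hd v) \<noteq> 0" "tl v = w"
    unfolding proj_first_def by (auto simp: single_def split: if_splits dest!: linext_nonzeroD)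
  then obtain x where x: "v = x # w"
    using assms by (cases v) (auto simp: tensor_in_def)
  then have "length (x # w) = Suc k \<and> set (x # w) \<subseteq> S \<and> sum_list (map cdim (x # w)) = m"
    using v(1) assms unfolding tensor_in_def by blast
  moreover from this have "cdim x = 0" using P_nonzeroD v(2) x by simp
  ultimately show "length w = k \<and> set w \<subseteq> S \<and> sum_list (map cdim w) = m" by simp
qed

lemma tensor_in_htpy:
  assumes "tensor_in S (Suc k) m z"
  shows "tensor_in S (Suc k) (Suc m) (htpy z)"
  unfolding tensor_in_def
proof (intro conjI[of "fsupp _"] allI impI)
  have "z v \<noteq> 0 \<Longrightarrow> fsupp (htpy_word v)" for v
    using assms by (cases v) (auto simp: tensor_in_def intro!: fsupp_rmul fsupp_H)
  then show "fsupp (htpy z)"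
    unfolding htpy_def using assms by (intro fsupp_linext) (auto simp: tensor_in_def)
next
  fix u assume "htpy z u \<noteq> 0"
  then obtain v where v: "z v \<noteq> 0" "htpy_word v u \<noteq> 0"
    unfolding htpy_def by (auto dest!: linext_nonzeroD)
  then obtain x w where xw: "v = x # w" "x \<in> S"
    using assms by (cases v) (auto simp: tensor_in_def)
  then obtain p where "u = p @ w" "H x p \<noteq> 0" using v(2) rmul_nonzeroD by fastforce
  then show "length u = Suc k \<and> set u \<subseteq> S \<and> sum_list (map cdim u) = Suc m"
    using H_nonzeroD[OF xw(2)] assms v(1) xw(1) by (fastforce simp: tensor_in_def)
qed

lemma tensor_in_z0_tensor:
  assumes "tensor_in S k m y"
  shows "tensor_in S (Suc k) m (z0_tensor y)"
  unfolding tensor_in_def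
proof (intro conjI[of "fsupp _"] allI impI)
  show "fsupp (z0_tensor y)" using assms by (intro fsupp_z0_tensor) (simp add: tensor_in_def)
next
  fix u assume "z0_tensor y u \<noteq> 0"
  then obtain v where "z0 v \<noteq> 0" "lmul v y u \<noteq> 0"
    unfolding z0_tensor_def by (auto dest!: linext_nonzeroD)
  then obtain y1 s where "u = y1 # s" "y1 \<in> S" "cdim y1 = 0" "y s \<noteq> 0"
    using z0_nonzeroD lmul_nonzeroD by fastforce
  then show "length u = Suc k \<and> set u \<subseteq> S \<and> sum_list (map cdim u) = m"
    using assms by (auto simp: tensor_in_def)
qed

text \<open>A cycle \<open>z\<close> in word length \<open>k + 1\<close> is \<open>\<partial>\<close> of \<open>htpy z\<close> up to \<open>z0 \<otimes> proj_first z\<close>,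
  and \<open>proj_first z\<close> is again a cycle, one word length shorter: this is the Kuenneth argument.\<close>

lemma tensor_cycle_is_boundary:
  assumes "tensor_in S k m z" "1 \<le> m" "bd_der z = (\<lambda>_. 0)"
  shows "\<exists>y. tensor_in S k (Suc m) y \<and> bd_der y = z"
  using assms
proof (induction k arbitrary: z)
  case 0
  then have "z v = 0" for v by (force simp: tensor_in_def)
  then have "z = (\<lambda>_. 0)" by auto
  then show ?case by (intro exI[of _ "\<lambda>_. 0"]) (simp add: tensor_in_def)
next
  case (Suc k)
  have fz: "fsupp z" using Suc.prems(1) by (simp add: tensor_in_def)
  have z: "v \<noteq> [] \<and> hd v \<in> S" if "z v \<noteq> 0" for v
  proof -
    have "length v = Suc k" "set v \<subseteq> S" using Suc.prems(1) that by (auto simp: tensor_in_def)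
    then show ?thesis by (cases v) auto
  qed
  let ?z' = "proj_first z"
  have tz': "tensor_in S k m ?z'" by (rule tensor_in_proj_first[OF Suc.prems(1)])
  then have fz': "fsupp ?z'" by (simp add: tensor_in_def)
  have dK: "bd_der (htpy z) u = z u - z0_tensor ?z' u" for u
    by (rule bd_der_htpy_cycle[OF fz z Suc.prems(3)]) auto
  have fK: "fsupp (htpy z)" using tensor_in_htpy[OF Suc.prems(1)] by (simp add: tensor_in_def)
  have "bd_der ?z' w = 0" for w
  proof (rule z0_tensor_cancel)
    fix u
    have "z0_tensor ?z' = (\<lambda>u. z u - bd_der (htpy z) u)" using dK by auto
    then have "bd_der (z0_tensor ?z') u = 0"
      using Suc.prems(3) bd_der_bd_der[OF fK] der_diff[OF fz fsupp_der[OF fK fsupp_bd_map]] by simp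
    then show "z0_tensor (bd_der ?z') u = 0" using bd_der_z0_tensor[OF fz'] by simp
  qed
  then obtain y' where y': "tensor_in S k (Suc m) y'" "bd_der y' = ?z'"
    using Suc.IH[OF tz' Suc.prems(2)] by fastforce
  have fy': "fsupp y'" using y' by (simp add: tensor_in_def)
  define y where "y = (\<lambda>u. htpy z u - z0_tensor y' u)"
  have "bd_der y u = z u" for u
    using dK bd_der_z0_tensor[OF fy'] y'(2) unfolding y_def
    by (simp add: der_diff[OF fK fsupp_z0_tensor[OF fy']])
  moreover have "tensor_in S (Suc k) (Suc m) y"
    unfolding y_def by (rule tensor_in_diff[OF tensor_in_htpy[OF Suc.prems(1)] tensor_in_z0_tensor[OF y'(1)]])
  ultimately show ?case by blast
qed

end

section \<open>Constructing the contraction\<close>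

lemma exists_fun_by_measure_rec:
  fixes \<mu> :: "'c \<Rightarrow> nat"
  assumes local: "\<And>G G' c y. (\<And>f. \<mu> f < \<mu> c \<Longrightarrow> G f = G' f) \<Longrightarrow> Q G c y \<Longrightarrow> Q G' c y"
    and step: "\<And>G c. (\<And>f. \<mu> f < \<mu> c \<Longrightarrow> Q G f (G f)) \<Longrightarrow> \<exists>y. Q G c y"
  shows "\<exists>G. \<forall>c. Q G c (G c)"
proof -
  define G where "G = wfrec (measure \<mu>) (\<lambda>G c. SOME y. Q G c y)"
  have G_eq: "G c = (SOME y. Q (cut G (measure \<mu>) c) c y)" for c
    unfolding G_def by (rule trans[OF wfrec]) simp_all
  have cut_eq: "\<mu> f < \<mu> c \<Longrightarrow> cut G (measure \<mu>) c f = G f" for f c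
    by (simp add: cut_apply)
  have "Q G c (G c)" for c
  proof (induction c rule: measure_induct_rule[of \<mu>])
    case (less c)
    have "Q (cut G (measure \<mu>) c) f (cut G (measure \<mu>) c f)" if "\<mu> f < \<mu> c" for f
    proof -
      have "Q (cut G (measure \<mu>) c) f (G f)"
        by (rule local[OF _ less[OF that]]) (use that in \<open>simp add: cut_apply\<close>)
      then show ?thesis using cut_eq[OF that] by simp
    qed
    then have "\<exists>y. Q (cut G (measure \<mu>) c) c y" by (rule step)
    then have "Q (cut G (measure \<mu>) c) c (G c)" unfolding G_eq[of c] by (rule someI_ex)
    then show ?case by (rule local[rotated]) (simp add: cut_eq)
  qed
  then show ?thesis by blast
qed

context cell_chain_complex
begin

context
  fixes S :: "'c set" and z0c :: "'c \<Rightarrow> rat"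
  assumes closed: "\<And>x. x \<in> S \<Longrightarrow> cl x \<subseteq> S"
    and cycle_is_boundary: "\<And>n z. 0 < n \<Longrightarrow> z \<in> chains_in cdim S n \<Longrightarrow> chain_bd bd z = (\<lambda>_. 0) \<Longrightarrow>
      \<exists>y\<in>chains_in cdim S (n + 1). chain_bd bd y = z"
    and z0c: "z0c \<in> chains_in cdim S 0"
    and z0c_not_boundary: "\<nexists>y. y \<in> chains_in cdim S 1 \<and> chain_bd bd y = z0c"
    and z0c_generates: "\<And>z. z \<in> chains_in cdim S 0 \<Longrightarrow>
      \<exists>q. \<exists>y\<in>chains_in cdim S 1. z = (\<lambda>c. q * z0c c + chain_bd bd y c)"
begin

text \<open>The conditions of \<open>contracting_homotopy\<close> at the cell \<open>c\<close> for \<open>(P c, H c) = ph\<close>,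
  given the values \<open>G\<close> on its faces.\<close>

definition htpy_at :: "('c \<Rightarrow> rat \<times> ('c list \<Rightarrow> rat)) \<Rightarrow> 'c \<Rightarrow> rat \<times> ('c list \<Rightarrow> rat) \<Rightarrow> bool" where
  "htpy_at G c ph \<longleftrightarrow> c \<in> S \<longrightarrow>
     (fst ph \<noteq> 0 \<longrightarrow> cdim c = 0) \<and> fsupp (snd ph) \<and>
     (\<forall>v. snd ph v \<noteq> 0 \<longrightarrow> (\<exists>y. v = [y] \<and> y \<in> S \<and> cdim y = cdim c + 1)) \<and>
     (\<forall>u. bd_der (snd ph) u + (\<Sum>f\<in>cl c. bd c f * snd (G f) u) = single [c] u - fst ph * chain_tensor z0c u)"

lemma htpy_at_cong:
  assumes "\<And>f. cdim f < cdim c \<Longrightarrow> G f = G' f" "htpy_at G c ph"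
  shows "htpy_at G' c ph"
  using assms(2) bd_sum_cong[of c "\<lambda>f. snd (G f)" "\<lambda>f. snd (G' f)"] assms(1)
  by (simp add: htpy_at_def)

lemma htpy_at_chain_tensor:
  assumes "yc \<in> chains_in cdim S (cdim c + 1)"
    and "\<And>u. bd_der (chain_tensor yc) u + (\<Sum>f\<in>cl c. bd c f * snd (G f) u) = single [c] u - q * chain_tensor z0c u"
    and "q \<noteq> 0 \<Longrightarrow> cdim c = 0"
  shows "htpy_at G c (q, chain_tensor yc)"
  using assms chain_tensor_in[OF assms(1)] by (simp add: htpy_at_def)

lemma htpy_at_dim0:
  assumes "c \<in> S" "cdim c = 0"
  shows "\<exists>ph. htpy_at G c ph"
proof -
  define ind where "ind = (\<lambda>x. if x = c then (1::rat) else 0)"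
  have "ind \<in> chains_in cdim S 0"
    using assms by (auto simp: ind_def chains_in_def fsupp_def supported_in_def homogeneous_def)
  then obtain q yc where yc: "yc \<in> chains_in cdim S 1" and ind: "ind = (\<lambda>x. q * z0c x + chain_bd bd yc x)"
    using z0c_generates by blast
  have "bd_der (chain_tensor yc) u = single [c] u - q * chain_tensor z0c u" for u
  proof -
    have "bd_der (chain_tensor yc) u = chain_tensor (chain_bd bd yc) u"
      using yc by (simp add: bd_der_chain_tensor chains_in_def)
    also have "\<dots> = chain_tensor ind u - q * chain_tensor z0c u"
      unfolding ind by (simp add: chain_tensor_def)
    finally show ?thesis by (simp add: single_eq_chain_tensor ind_def)
  qed
  then have "htpy_at G c (q, chain_tensor yc)"
    using yc assms(2) by (intro htpy_at_chain_tensor) (simp_all add: bd_dim0)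
  then show ?thesis by blast
qed

definition remainder :: "('c \<Rightarrow> rat \<times> ('c list \<Rightarrow> rat)) \<Rightarrow> 'c \<Rightarrow> 'c list \<Rightarrow> rat" where
  "remainder G c = (\<lambda>u. single [c] u - (\<Sum>f\<in>cl c. bd c f * snd (G f) u))"

definition remainder_coeff :: "('c \<Rightarrow> rat \<times> ('c list \<Rightarrow> rat)) \<Rightarrow> 'c \<Rightarrow> rat" where
  "remainder_coeff G c = (\<Sum>f\<in>cl c. bd c f * fst (G f))"

context
  fixes G c n
  assumes c: "c \<in> S" "cdim c = Suc n"
    and faces: "\<And>f. cdim f < cdim c \<Longrightarrow> htpy_at G f (G f)"
begin

lemma face_htpy:
  assumes "bd c f \<noteq> 0"
  shows "fsupp (snd (G f))"
    and "snd (G f) v \<noteq> 0 \<Longrightarrow> \<exists>y. v = [y] \<and> y \<in> S \<and> cdim y = cdim c"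
    and "bd_der (snd (G f)) u = single [f] u - fst (G f) * chain_tensor z0c u - (\<Sum>g\<in>cl f. bd f g * snd (G g) u)"
    and "fst (G f) \<noteq> 0 \<Longrightarrow> n = 0"
proof -
  have f: "f \<in> S" "cdim f + 1 = cdim c" using bd_nonzeroD[OF assms] closed[OF c(1)] by auto
  then have "htpy_at G f (G f)" using faces by simp
  then have h: "fsupp (snd (G f))" "\<And>v. snd (G f) v \<noteq> 0 \<Longrightarrow> \<exists>y. v = [y] \<and> y \<in> S \<and> cdim y = cdim f + 1"
    "\<And>u. bd_der (snd (G f)) u + (\<Sum>g\<in>cl f. bd f g * snd (G g) u)
       = single [f] u - fst (G f) * chain_tensor z0c u"
    "fst (G f) \<noteq> 0 \<Longrightarrow> cdim f = 0"
    using f(1) unfolding htpy_at_def by blast+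
  show "fsupp (snd (G f))" by (rule h(1))
  show "snd (G f) v \<noteq> 0 \<Longrightarrow> \<exists>y. v = [y] \<and> y \<in> S \<and> cdim y = cdim c" using h(2) f(2) by simp
  show "bd_der (snd (G f)) u = single [f] u - fst (G f) * chain_tensor z0c u - (\<Sum>g\<in>cl f. bd f g * snd (G g) u)"
    using h(3)[of u] by (simp add: eq_diff_eq)
  show "fst (G f) \<noteq> 0 \<Longrightarrow> n = 0" using h(4) f(2) c(2) by simp
qed

lemma fsupp_face_htpy_term: "fsupp (\<lambda>u. bd c f * snd (G f) u)"
  by (cases "bd c f = 0") (auto intro: fsupp_scale face_htpy(1))

lemma fsupp_remainder: "fsupp (remainder G c)"
  unfolding remainder_def by (intro fsupp_diff fsupp_single fsupp_sum finite_cl fsupp_face_htpy_term)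

lemma remainder_nonzeroD:
  assumes "remainder G c v \<noteq> 0"
  shows "\<exists>y. v = [y] \<and> y \<in> S \<and> cdim y = Suc n"
proof (cases "single [c] v = 0")
  case True
  then have "(\<Sum>f\<in>cl c. bd c f * snd (G f) v) \<noteq> 0"
    using assms unfolding remainder_def by simp
  then obtain f where "bd c f * snd (G f) v \<noteq> 0"
    using sum.not_neutral_contains_not_neutral by blast
  then show ?thesis using face_htpy(2)[of f v] c(2) by auto
qed (use c in \<open>auto simp: single_def split: if_splits\<close>)

lemma bd_der_remainder: "bd_der (remainder G c) u = remainder_coeff G c * chain_tensor z0c u"
proof -
  let ?z0 = "chain_tensor z0c u" and ?B = "\<lambda>f. \<Sum>g\<in>cl f. bd f g * snd (G g) u"
  have "bd_der (\<lambda>u. \<Sum>f\<in>cl c. bd c f * snd (G f) u) u = (\<Sum>f\<in>cl c. bd c f * bd_der (snd (G f)) u)"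
    by (simp add: der_sum[OF finite_cl fsupp_face_htpy_term] der_scale)
  also have "\<dots> = (\<Sum>f\<in>cl c. bd c f * single [f] u - (bd c f * fst (G f)) * ?z0 - bd c f * ?B f)"
  proof (rule sum.cong[OF refl])
    fix f
    show "bd c f * bd_der (snd (G f)) u = bd c f * single [f] u - (bd c f * fst (G f)) * ?z0 - bd c f * ?B f"
      by (cases "bd c f = 0") (simp_all add: face_htpy(3) right_diff_distrib mult.assoc)
  qed
  also have "\<dots> = (\<Sum>f\<in>cl c. bd c f * single [f] u) - remainder_coeff G c * ?z0 - (\<Sum>f\<in>cl c. bd c f * ?B f)"
    by (simp only: sum_subtractf remainder_coeff_def sum_distrib_right)
  also have "\<dots> = bd_der (single [c]) u - remainder_coeff G c * ?z0"
    by (simp only: bd_bd_sum der_single der_word.simps rmul_Nil lmul_zero bd_map_eq_sum)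
  finally have "bd_der (\<lambda>u. \<Sum>f\<in>cl c. bd c f * snd (G f) u) u = bd_der (single [c]) u - remainder_coeff G c * ?z0" .
  then show ?thesis
    unfolding remainder_def
    by (simp add: der_diff[OF fsupp_single fsupp_sum[OF finite_cl fsupp_face_htpy_term]])
qed

lemma remainder_chain:
  shows "(\<lambda>x. remainder G c [x]) \<in> chains_in cdim S (Suc n)"
    and "chain_tensor (\<lambda>x. remainder G c [x]) = remainder G c"
    and "chain_bd bd (\<lambda>x. remainder G c [x]) = (\<lambda>x. remainder_coeff G c * z0c x)"
proof -
  show rc: "(\<lambda>x. remainder G c [x]) \<in> chains_in cdim S (Suc n)"
    and re: "chain_tensor (\<lambda>x. remainder G c [x]) = remainder G c"
    using chain_of_tensor[OF fsupp_remainder remainder_nonzeroD] by auto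
  have eq: "chain_tensor (chain_bd bd (\<lambda>x. remainder G c [x])) = bd_der (remainder G c)"
    using bd_der_chain_tensor[of "\<lambda>x. remainder G c [x]"] rc re by (simp add: chains_in_def)
  show "chain_bd bd (\<lambda>x. remainder G c [x]) = (\<lambda>x. remainder_coeff G c * z0c x)"
  proof
    fix x
    have "chain_bd bd (\<lambda>x. remainder G c [x]) x = chain_tensor (chain_bd bd (\<lambda>x. remainder G c [x])) [x]"
      by simp
    also have "\<dots> = remainder_coeff G c * z0c x"
      by (simp only: eq bd_der_remainder chain_tensor_single)
    finally show "chain_bd bd (\<lambda>x. remainder G c [x]) x = remainder_coeff G c * z0c x" .
  qed
qed

text \<open>A nonzero coefficient would make the \<open>1\<close>-chain \<open>remainder / coeff\<close> bound \<open>z0c\<close>.\<close>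

lemma remainder_coeff_eq_0: "remainder_coeff G c = 0"
proof (rule ccontr)
  assume nz: "remainder_coeff G c \<noteq> 0"
  have "n = 0"
  proof (rule ccontr)
    assume "n \<noteq> 0"
    then have "bd c f * fst (G f) = 0" for f
      using face_htpy(4)[of f] by (cases "bd c f = 0") auto
    then have "remainder_coeff G c = 0"
      unfolding remainder_coeff_def by (intro sum.neutral) blast
    then show False using nz by simp
  qed
  define yc where "yc = (\<lambda>x. (1 / remainder_coeff G c) * remainder G c [x])"
  have "yc \<in> chains_in cdim S 1"
    using remainder_chain(1) \<open>n = 0\<close>
    by (auto simp: yc_def chains_in_def fsupp_def supported_in_def homogeneous_def)
  moreover have "chain_bd bd yc = z0c"
  proof
    fix x
    have "chain_bd bd yc x = (1 / remainder_coeff G c) * chain_bd bd (\<lambda>x. remainder G c [x]) x"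
      unfolding yc_def by (rule chain_bd_scale)
    then show "chain_bd bd yc x = z0c x" using nz by (simp add: remainder_chain(3))
  qed
  ultimately show False using z0c_not_boundary by blast
qed

lemma htpy_at_pos: "\<exists>ph. htpy_at G c ph"
proof -
  have "chain_bd bd (\<lambda>x. remainder G c [x]) = (\<lambda>_. 0)"
    by (simp add: remainder_chain(3) remainder_coeff_eq_0)
  then obtain yc where yc: "yc \<in> chains_in cdim S (cdim c + 1)" "chain_bd bd yc = (\<lambda>x. remainder G c [x])"
    using cycle_is_boundary[OF _ remainder_chain(1)] c(2) by auto
  have "bd_der (chain_tensor yc) = remainder G c"
    using yc bd_der_chain_tensor[of yc] remainder_chain(2) by (simp add: chains_in_def)
  then have "htpy_at G c (0, chain_tensor yc)"
    by (intro htpy_at_chain_tensor[OF yc(1)]) (simp_all add: remainder_def)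
  then show ?thesis by blast
qed

end

lemma htpy_at_exists: "\<exists>G. \<forall>c. htpy_at G c (G c)"
proof (rule exists_fun_by_measure_rec[of cdim])
  fix G G' c ph
  assume "\<And>f. cdim f < cdim c \<Longrightarrow> G f = G' f" "htpy_at G c ph"
  then show "htpy_at G' c ph" by (rule htpy_at_cong)
next
  fix G c
  assume faces: "\<And>f. cdim f < cdim c \<Longrightarrow> htpy_at G f (G f)"
  show "\<exists>ph. htpy_at G c ph"
  proof (cases "c \<in> S")
    case False
    then show ?thesis by (simp add: htpy_at_def)
  next
    case True
    then show ?thesis
      using htpy_at_dim0[OF True] htpy_at_pos[OF True _ faces] by (cases "cdim c") auto
  qed
qed

lemma z0c_nonzero: "\<exists>y0. z0c y0 \<noteq> 0"
proof (rule ccontr)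
  assume "\<nexists>y0. z0c y0 \<noteq> 0"
  then have "z0c = (\<lambda>_. 0)" by auto
  moreover have "(\<lambda>_. 0) \<in> chains_in cdim S 1" "chain_bd bd (\<lambda>_. 0) = (\<lambda>_. 0)"
    by (simp_all add: chains_in_def supported_in_def homogeneous_def chain_bd_def)
  ultimately show False using z0c_not_boundary by blast
qed

lemma contracting_homotopy_exists_of_generator: "\<exists>z0 P H. contracting_homotopy cdim bd cl S z0 P H"
proof -
  obtain G where G: "\<And>c. htpy_at G c (G c)" using htpy_at_exists by blast
  have "contracting_homotopy cdim bd cl S (chain_tensor z0c) (\<lambda>x. fst (G x)) (\<lambda>x. snd (G x))"
  proof unfold_locales
    show "fsupp (chain_tensor z0c)" by (rule chain_tensor_in(1)[OF z0c])
    show "\<exists>y0. chain_tensor z0c [y0] \<noteq> 0" using z0c_nonzero by simp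
    show "\<exists>y. v = [y] \<and> y \<in> S \<and> cdim y = 0" if "chain_tensor z0c v \<noteq> 0" for v
      using chain_tensor_in(2)[OF z0c that] by simp
    fix x assume "x \<in> S"
    then show "fsupp (snd (G x))" "\<And>v. snd (G x) v \<noteq> 0 \<Longrightarrow> \<exists>y. v = [y] \<and> y \<in> S \<and> cdim y = cdim x + 1"
      "fst (G x) \<noteq> 0 \<Longrightarrow> cdim x = 0"
      "\<And>u. bd_der (snd (G x)) u + (\<Sum>f\<in>cl x. bd x f * snd (G f) u) = single [x] u - fst (G x) * chain_tensor z0c u"
      using G[of x] unfolding htpy_at_def by blast+
  qed
  then show ?thesis by blast
qed

end

lemma contracting_homotopy_exists:
  assumes "rat_homology_of_point cdim bd S" "\<And>x. x \<in> S \<Longrightarrow> cl x \<subseteq> S"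
  shows "\<exists>z0 P H. contracting_homotopy cdim bd cl S z0 P H"
proof -
  obtain z0c where z0c: "z0c \<in> chains_in cdim S 0" "\<nexists>y. y \<in> chains_in cdim S 1 \<and> chain_bd bd y = z0c"
    "\<And>z. z \<in> chains_in cdim S 0 \<Longrightarrow> \<exists>q. \<exists>y\<in>chains_in cdim S 1. z = (\<lambda>c. q * z0c c + chain_bd bd y c)"
    using assms(1) unfolding rat_homology_of_point_def by blast
  have cycle: "\<And>n z. 0 < n \<Longrightarrow> z \<in> chains_in cdim S n \<Longrightarrow> chain_bd bd z = (\<lambda>_. 0) \<Longrightarrow>
      \<exists>y\<in>chains_in cdim S (n + 1). chain_bd bd y = z"
    using assms(1) unfolding rat_homology_of_point_def by blast
  show ?thesis
    using assms(2) cycle z0c by (rule contracting_homotopy_exists_of_generator)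
qed

end

section \<open>Truncations of the total derivation\<close>

definition sdeg :: "('c \<Rightarrow> nat) \<Rightarrow> 'c list \<Rightarrow> int" where
  "sdeg cdim v = int (sum_list (map cdim v)) - int (length v)"

lemma short_list_cases:
  assumes "length w \<le> 2"
  obtains "w = []" | a where "w = [a]" | a b where "w = [a, b]"
  using assms by (cases w rule: remdups_adj.cases) auto

context cell_chain_complex
begin

lemma der_word_track:
  assumes "\<And>c w. \<epsilon> c w \<noteq> 0 \<Longrightarrow> sdeg cdim w = sdeg cdim [c] - 1 \<and> set w \<subseteq> cl c"
    and "der_word cdim \<epsilon> v u \<noteq> 0"
  shows "sdeg cdim u = sdeg cdim v - 1 \<and> set u \<subseteq> (\<Union>x\<in>set v. cl x)"
proof -
  obtain p c s w where pcs: "v = p @ c # s" "u = p @ w @ s" "\<epsilon> c w \<noteq> 0"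
    using der_word_nonzeroD[OF assms(2)] by blast
  have w: "sdeg cdim w = sdeg cdim [c] - 1" "set w \<subseteq> cl c" using assms(1)[OF pcs(3)] by auto
  have "sdeg cdim u = sdeg cdim v - 1"
    using pcs(1,2) w(1) by (simp add: sdeg_def)
  moreover have "set u \<subseteq> (\<Union>x\<in>set v. cl x)"
    using pcs(1,2) w(2) cl_self by fastforce
  ultimately show ?thesis by blast
qed

lemma der_track:
  assumes "\<And>c w. \<epsilon> c w \<noteq> 0 \<Longrightarrow> sdeg cdim w = sdeg cdim [c] - 1 \<and> set w \<subseteq> cl c"
    and "der cdim \<epsilon> t u \<noteq> 0"
  shows "\<exists>v. t v \<noteq> 0 \<and> sdeg cdim u = sdeg cdim v - 1 \<and> set u \<subseteq> (\<Union>x\<in>set v. cl x)"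
  using linext_nonzeroD[OF assms(2)[unfolded der_def]] der_word_track[OF assms(1)] by blast

lemma bd_der_nonzero_length: "bd_der t u \<noteq> 0 \<Longrightarrow> \<exists>v. t v \<noteq> 0 \<and> length v = length u"
  by (auto dest!: der_nonzeroD bd_map_nonzeroD)

end

locale local_comult = cell_chain_complex cdim bd cl
  for cdim :: "'c \<Rightarrow> nat" and bd :: "'c \<Rightarrow> 'c \<Rightarrow> rat" and cl :: "'c \<Rightarrow> 'c set" +
  fixes \<Delta> :: "'c \<Rightarrow> 'c \<Rightarrow> 'c \<Rightarrow> rat"
  assumes acyclic_cl: "\<forall>e. rat_homology_of_point cdim bd (cl e)"
    and Delta_local: "\<forall>e a b. \<Delta> e a b \<noteq> 0 \<longrightarrow> a \<in> cl e \<and> b \<in> cl e"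
    and Delta_degree: "\<forall>e a b. \<Delta> e a b \<noteq> 0 \<longrightarrow> cdim a + cdim b = cdim e"
    and Delta_chain_map: "\<forall>e a b. (\<Sum>f\<in>cl e. bd e f * \<Delta> f a b) =
          (\<Sum>x\<in>cl e. \<Delta> e x b * bd x a) + (\<Sum>y\<in>cl e. (-1) ^ cdim a * \<Delta> e a y * bd y b)"
begin

definition higher_delta :: "nat \<Rightarrow> ('c \<Rightarrow> 'c list \<Rightarrow> rat) \<Rightarrow> bool" where
  "higher_delta k g \<longleftrightarrow> local_map cl g \<and> (\<forall>e w. cdim e = 0 \<longrightarrow> g e w = 0) \<and>
     (\<forall>e w. g e w \<noteq> 0 \<longrightarrow> length w = k \<and> sum_list (map cdim w) + 2 = cdim e + k)"

definition higher_deltas :: "(nat \<Rightarrow> 'c \<Rightarrow> 'c list \<Rightarrow> rat) \<Rightarrow> nat \<Rightarrow> bool" where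
  "higher_deltas \<delta> N \<longleftrightarrow> (\<forall>j. 3 \<le> j \<and> j \<le> N \<longrightarrow> higher_delta j (\<delta> j))"

definition trunc_delta :: "nat \<Rightarrow> (nat \<Rightarrow> 'c \<Rightarrow> 'c list \<Rightarrow> rat) \<Rightarrow> 'c \<Rightarrow> 'c list \<Rightarrow> rat" where
  "trunc_delta N \<delta> c w = (if length w \<le> N then total_delta cdim bd \<Delta> \<delta> c w else 0)"

definition sq_zero_upto :: "(nat \<Rightarrow> 'c \<Rightarrow> 'c list \<Rightarrow> rat) \<Rightarrow> nat \<Rightarrow> bool" where
  "sq_zero_upto \<delta> N \<longleftrightarrow> (\<forall>c u. length u \<le> N \<longrightarrow> der_sq_word cdim (trunc_delta N \<delta>) [c] u = 0)"

lemma trunc_delta_Nil[simp]: "trunc_delta N \<delta> c [] = 0"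
  by (simp add: trunc_delta_def total_delta_def)

lemma trunc_delta_letter: "1 \<le> N \<Longrightarrow> trunc_delta N \<delta> c [f] = bd c f"
  by (simp add: trunc_delta_def total_delta_def)

lemma trunc_delta_pair: "2 \<le> N \<Longrightarrow> trunc_delta N \<delta> c [a, b] = (- 1) ^ cdim a * \<Delta> c a b"
  by (simp add: trunc_delta_def total_delta_def)

lemma trunc_delta_short: "1 \<le> N \<Longrightarrow> length w \<le> 1 \<Longrightarrow> trunc_delta N \<delta> c w = bd_map c w"
  by (cases w) (auto simp: trunc_delta_def total_delta_def bd_map_def)

lemma trunc_delta_nonzeroD:
  assumes "higher_deltas \<delta> N" "trunc_delta N \<delta> c w \<noteq> 0"
  shows "set w \<subseteq> cl c \<and> 1 \<le> length w \<and> length w \<le> N \<and> sum_list (map cdim w) + 2 = cdim c + length w"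
proof -
  have lN: "length w \<le> N" and nz: "total_delta cdim bd \<Delta> \<delta> c w \<noteq> 0"
    using assms(2) by (simp_all add: trunc_delta_def split: if_splits)
  show ?thesis
  proof (cases "length w \<le> 2")
    case True
    then show ?thesis
    proof (cases rule: short_list_cases)
      case 1
      then show ?thesis using nz by (simp add: total_delta_def)
    next
      case (2 f)
      then have "bd c f \<noteq> 0" using nz by (simp add: total_delta_def)
      then show ?thesis using 2 lN bd_nonzeroD[of c f] by simp
    next
      case (3 a b)
      then have "\<Delta> c a b \<noteq> 0" using nz by (simp add: total_delta_def)
      then show ?thesis using 3 lN Delta_local Delta_degree by simp
    qed
  next
    case False
    then have "\<delta> (length w) c w \<noteq> 0" "higher_delta (length w) (\<delta> (length w))"
      using nz assms(1) lN by (auto simp: total_delta_def higher_deltas_def)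
    then have "set w \<subseteq> cl c" "sum_list (map cdim w) + 2 = cdim c + length w"
      unfolding higher_delta_def local_map_def by blast+
    then show ?thesis using False lN by simp
  qed
qed

lemma fsupp_trunc_delta:
  assumes "higher_deltas \<delta> N"
  shows "fsupp (trunc_delta N \<delta> c)"
proof -
  have "{w. trunc_delta N \<delta> c w \<noteq> 0} \<subseteq> {w. set w \<subseteq> cl c \<and> length w \<le> N}"
    using trunc_delta_nonzeroD[OF assms] by blast
  moreover have "finite {w. set w \<subseteq> cl c \<and> length w \<le> N}"
    by (rule finite_lists_length_le[OF finite_cl])
  ultimately show ?thesis unfolding fsupp_def by (rule finite_subset)
qed

lemma odd_map_trunc_delta:
  assumes "higher_deltas \<delta> N"
  shows "odd_map cdim (trunc_delta N \<delta>)"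
  unfolding odd_map_def
proof (intro conjI allI impI)
  fix c show "fsupp (trunc_delta N \<delta> c)" by (rule fsupp_trunc_delta[OF assms])
next
  fix c w assume "trunc_delta N \<delta> c w \<noteq> 0"
  then have "sum_list (map cdim w) + 2 = cdim c + length w"
    using trunc_delta_nonzeroD[OF assms] by blast
  moreover have "\<And>a b c :: nat. a + 2 = c + b \<Longrightarrow> even (a + b) = even c" by presburger
  ultimately have "even (sum_list (map cdim w) + length w) = even (cdim c)" by blast
  then show "psign cdim w = - psign cdim [c]"
    by (auto simp: psign_def)
qed

lemma trunc_delta_track:
  assumes "higher_deltas \<delta> N" "trunc_delta N \<delta> c w \<noteq> 0"
  shows "sdeg cdim w = sdeg cdim [c] - 1 \<and> set w \<subseteq> cl c"
proof -
  have "set w \<subseteq> cl c" "sum_list (map cdim w) + 2 = cdim c + length w"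
    using trunc_delta_nonzeroD[OF assms] by blast+
  then show ?thesis by (simp add: sdeg_def)
qed

lemma trunc_delta_dim0:
  assumes "higher_deltas \<delta> N" "2 \<le> N" "cdim c = 0"
  shows "trunc_delta N \<delta> c = (\<lambda>w. if w = [c, c] then \<Delta> c c c else 0)"
proof
  fix w
  show "trunc_delta N \<delta> c w = (if w = [c, c] then \<Delta> c c c else 0)"
  proof (cases "trunc_delta N \<delta> c w = 0")
    case False
    then have h: "set w \<subseteq> {c}" "sum_list (map cdim w) + 2 = length w"
      using trunc_delta_nonzeroD[OF assms(1)] cl_dim0[OF assms(3)] assms(3) by auto
    have "map cdim w = replicate (length w) 0"
      using h(1) assms(3) by (induction w) auto
    then have "length w = 2" using h(2) by (simp add: sum_list_replicate)
    then have "w = [c, c]" using h(1) by (auto simp: length_Suc_conv numeral_2_eq_2)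
    then show ?thesis using trunc_delta_pair[OF assms(2)] assms(3) by simp
  qed (use trunc_delta_pair[OF assms(2)] assms(3) in auto)
qed

text \<open>The two terms \<open>\<lambda>\<^sup>2 c c c\<close> of \<open>D\<^sup>2 c\<close> cancel because \<open>c\<close> has odd shifted degree.\<close>

lemma der_sq_word_dim0:
  assumes "higher_deltas \<delta> N" "2 \<le> N" "cdim c = 0"
  shows "der_sq_word cdim (trunc_delta N \<delta>) [c] u = 0"
proof -
  let ?e = "trunc_delta N \<delta>" and ?ccc = "\<lambda>u. if u = [c, c, c] then \<Delta> c c c else 0"
  have ec: "?e c = (\<lambda>w. if w = [c, c] then \<Delta> c c c else 0)" by (rule trunc_delta_dim0[OF assms])
  have "der_sq_word cdim ?e [c] u = (\<Sum>v\<in>{[c, c]}. ?e c v * der_word cdim ?e v u)"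
    unfolding der_sq_word_single der_def by (rule linext_eq_sum) (auto simp: supp_def ec)
  also have "\<dots> = \<Delta> c c c * (rmul (?e c) [c] u + psign cdim [c] * lmul [c] (?e c) u)"
    by (simp add: ec)
  also have "rmul (?e c) [c] = ?ccc"
    by (rule rmul_eqI) (auto simp: ec)
  also have "lmul [c] (?e c) = ?ccc"
    by (rule lmul_eqI) (auto simp: ec)
  finally show ?thesis using assms(3) by (simp add: psign_single)
qed

lemma der_sq_word_trunc_2:
  "der_sq_word cdim (trunc_delta 2 \<delta>) [c] u =
     (\<Sum>f\<in>cl c. bd c f * der_word cdim (trunc_delta 2 \<delta>) [f] u)
     + (\<Sum>x\<in>cl c. \<Sum>y\<in>cl c. trunc_delta 2 \<delta> c [x, y] * der_word cdim (trunc_delta 2 \<delta>) [x, y] u)"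
proof -
  have "higher_deltas \<delta> 2" by (auto simp: higher_deltas_def)
  then have "der cdim (trunc_delta 2 \<delta>) (trunc_delta 2 \<delta> c) u =
     (\<Sum>f\<in>cl c. trunc_delta 2 \<delta> c [f] * der_word cdim (trunc_delta 2 \<delta>) [f] u)
     + (\<Sum>x\<in>cl c. \<Sum>y\<in>cl c. trunc_delta 2 \<delta> c [x, y] * der_word cdim (trunc_delta 2 \<delta>) [x, y] u)"
    unfolding der_def
  proof (intro linext_letters_pairs fsupp_trunc_delta finite_cl)
    fix v assume "trunc_delta 2 \<delta> c v \<noteq> 0"
    then have v: "set v \<subseteq> cl c" "1 \<le> length v" and "length v \<le> 2"
      using trunc_delta_nonzeroD[OF \<open>higher_deltas \<delta> 2\<close>] by blast+
    from \<open>length v \<le> 2\<close> show "(\<exists>f\<in>cl c. v = [f]) \<or> (\<exists>x\<in>cl c. \<exists>y\<in>cl c. v = [x, y])"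
      by (cases rule: short_list_cases) (use v in auto)
  qed (rule \<open>higher_deltas \<delta> 2\<close>)
  then show ?thesis by (simp add: der_sq_word_single trunc_delta_letter)
qed

lemma der_word_trunc_2_pair:
  "der_word cdim (trunc_delta 2 \<delta>) [x, y] [a, b] =
     (if y = b then bd x a else 0) + psign cdim [x] * (if x = a then bd y b else 0)"
proof -
  have "rmul (trunc_delta 2 \<delta> x) [y] [a, b] = (if y = b then bd x a else 0)"
    using rmul_append[of "trunc_delta 2 \<delta> x" "[y]" "[a]"] by (auto simp: trunc_delta_letter rmul_not_suffix)
  moreover have "lmul [x] (trunc_delta 2 \<delta> y) [a, b] = (if x = a then bd y b else 0)"
    using lmul_append[of "[x]" "trunc_delta 2 \<delta> y" "[b]"] by (auto simp: trunc_delta_letter lmul_not_prefix)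
  ultimately show ?thesis by simp
qed

lemma trunc_2_pairs_sum:
  "(\<Sum>x\<in>cl c. \<Sum>y\<in>cl c. trunc_delta 2 \<delta> c [x, y] * der_word cdim (trunc_delta 2 \<delta>) [x, y] [a, b])
     = - ((- 1) ^ cdim a * (\<Sum>x\<in>cl c. \<Delta> c x b * bd x a)) - (\<Sum>y\<in>cl c. \<Delta> c a y * bd y b)"
proof -
  let ?e = "trunc_delta 2 \<delta>"
  have "(\<Sum>x\<in>cl c. \<Sum>y\<in>cl c. ?e c [x, y] * der_word cdim ?e [x, y] [a, b])
      = (\<Sum>x\<in>cl c. \<Sum>y\<in>cl c. (if y = b then ?e c [x, y] * bd x a else 0)
           + (if x = a then ?e c [x, y] * psign cdim [x] * bd y b else 0))"
    by (intro sum.cong refl) (simp only: der_word_trunc_2_pair, simp add: ring_distribs)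
  also have "\<dots> = (\<Sum>x\<in>cl c. \<Sum>y\<in>cl c. if y = b then ?e c [x, y] * bd x a else 0)
      + (\<Sum>x\<in>cl c. \<Sum>y\<in>cl c. if x = a then ?e c [x, y] * psign cdim [x] * bd y b else 0)"
    by (simp only: sum.distrib)
  also have "(\<Sum>x\<in>cl c. \<Sum>y\<in>cl c. if y = b then ?e c [x, y] * bd x a else 0)
      = (\<Sum>x\<in>cl c. ?e c [x, b] * bd x a)"
    by (intro sum.cong refl sum_if_eq_vanishing finite_cl) (simp add: trunc_delta_pair, use Delta_local in blast)
  also have "\<dots> = - ((- 1) ^ cdim a * (\<Sum>x\<in>cl c. \<Delta> c x b * bd x a))"
  proof -
    have "?e c [x, b] * bd x a = - ((- 1) ^ cdim a * (\<Delta> c x b * bd x a))" for x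
    proof (cases "bd x a = 0")
      case False
      then have "cdim x = Suc (cdim a)" using bd_nonzeroD by fastforce
      then show ?thesis by (simp add: trunc_delta_pair)
    qed simp
    then show ?thesis by (simp add: sum_distrib_left sum_negf)
  qed
  also have "(\<Sum>x\<in>cl c. \<Sum>y\<in>cl c. if x = a then ?e c [x, y] * psign cdim [x] * bd y b else 0)
      = (\<Sum>y\<in>cl c. ?e c [a, y] * psign cdim [a] * bd y b)"
    by (subst sum.swap, rule sum.cong[OF refl], rule sum_if_eq_vanishing[OF finite_cl])
      (use Delta_local in \<open>auto simp: trunc_delta_pair\<close>)
  also have "\<dots> = - (\<Sum>y\<in>cl c. \<Delta> c a y * bd y b)"
    by (simp add: trunc_delta_pair psign_single sum_negf[symmetric] algebra_simps)
  finally show ?thesis by simp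
qed

lemma der_sq_word_trunc_2_pair: "der_sq_word cdim (trunc_delta 2 \<delta>) [c] [a, b] = 0"
proof -
  let ?s = "(- 1 :: rat) ^ cdim a"
  have "(\<Sum>f\<in>cl c. bd c f * der_word cdim (trunc_delta 2 \<delta>) [f] [a, b]) = ?s * (\<Sum>f\<in>cl c. bd c f * \<Delta> f a b)"
    by (simp add: trunc_delta_pair sum_distrib_left algebra_simps)
  moreover have "(\<Sum>f\<in>cl c. bd c f * \<Delta> f a b)
      = (\<Sum>x\<in>cl c. \<Delta> c x b * bd x a) + ?s * (\<Sum>y\<in>cl c. \<Delta> c a y * bd y b)"
    using Delta_chain_map by (simp add: sum_distrib_left algebra_simps)
  moreover have "?s * ?s = 1" by (simp add: power_mult_distrib[symmetric])
  ultimately show ?thesis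
    unfolding der_sq_word_trunc_2 trunc_2_pairs_sum by (simp add: algebra_simps)
qed

lemma sq_zero_upto_2: "sq_zero_upto \<delta> 2"
  unfolding sq_zero_upto_def
proof (intro allI impI)
  fix c and u :: "'c list" assume "length u \<le> 2"
  then show "der_sq_word cdim (trunc_delta 2 \<delta>) [c] u = 0"
  proof (cases rule: short_list_cases)
    case 1
    then show ?thesis by (simp add: der_sq_word_trunc_2 rmul_def lmul_def)
  next
    case (2 a)
    moreover have "der_word cdim (trunc_delta 2 \<delta>) [x, y] [a] = 0" for x y
      by (simp add: rmul_def lmul_def)
    ultimately show ?thesis by (simp add: der_sq_word_trunc_2 trunc_delta_letter bd_bd)
  next
    case (3 a b)
    then show ?thesis by (simp add: der_sq_word_trunc_2_pair)
  qed
qed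

end

section \<open>The inductive step\<close>

context local_comult
begin

lemma closure_tensor_cycle_is_boundary:
  assumes "tensor_in (cl c) k m z" "1 \<le> m" "bd_der z = (\<lambda>_. 0)"
  shows "\<exists>y. tensor_in (cl c) k (Suc m) y \<and> bd_der y = z"
proof -
  obtain z0 P H where "contracting_homotopy cdim bd cl (cl c) z0 P H"
    using contracting_homotopy_exists acyclic_cl cl_mono by blast
  then interpret contracting_homotopy cdim bd cl "cl c" z0 P H .
  show ?thesis by (rule tensor_cycle_is_boundary[OF assms])
qed

context
  fixes \<delta> :: "nat \<Rightarrow> 'c \<Rightarrow> 'c list \<Rightarrow> rat" and N :: nat
  assumes N2: "2 \<le> N" and lower: "higher_deltas \<delta> N" and sq_lower: "sq_zero_upto \<delta> N"
begin

abbreviation eps :: "'c \<Rightarrow> 'c list \<Rightarrow> rat" where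
  "eps \<equiv> trunc_delta N \<delta>"

lemma fsupp_eps: "fsupp (eps c)"
  by (rule fsupp_trunc_delta[OF lower])

lemma eps_nonzeroD: "eps c w \<noteq> 0 \<Longrightarrow> set w \<subseteq> cl c \<and> 1 \<le> length w \<and> length w < Suc N"
  using trunc_delta_nonzeroD[OF lower] by fastforce

lemma eps_short: "length w \<le> 1 \<Longrightarrow> eps c w = bd_map c w"
  using N2 by (intro trunc_delta_short) auto

lemma eps_letter: "eps c [f] = bd c f"
  using N2 by (intro trunc_delta_letter) auto

lemma der_sq_eps_short: "length u < Suc N \<Longrightarrow> der_sq_word cdim eps [x] u = 0"
  using sq_lower by (simp add: sq_zero_upto_def)

lemma der_sq_eps_length: "der_sq_word cdim eps v u \<noteq> 0 \<Longrightarrow> length v + Suc N \<le> length u + 1"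
  by (rule der_sq_word_length[OF odd_map_trunc_delta[OF lower] der_sq_eps_short])

text \<open>The obstruction: the first possibly nonzero component of \<open>D\<^sup>2 c\<close>, for \<open>D\<close> the derivation of
  \<open>\<delta>\<^sub>1 + \<dots> + \<delta>\<^sub>N\<close>.\<close>

definition obstruction :: "'c \<Rightarrow> 'c list \<Rightarrow> rat" where
  "obstruction c u = (if length u = Suc N then der_sq_word cdim eps [c] u else 0)"

lemma fsupp_obstruction: "fsupp (obstruction c)"
proof (rule fsupp_subset)
  show "fsupp (der_sq_word cdim eps [c])"
    unfolding der_sq_word_single by (rule fsupp_der[OF fsupp_eps fsupp_eps])
qed (simp add: obstruction_def split: if_splits)

lemma obstruction_nonzeroD:
  assumes "obstruction c u \<noteq> 0"
  shows "length u = Suc N \<and> set u \<subseteq> cl c \<and> sum_list (map cdim u) + 3 = cdim c + Suc N"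
proof -
  have lu: "length u = Suc N" and nz: "der cdim eps (eps c) u \<noteq> 0"
    using assms by (auto simp: obstruction_def der_sq_word_single split: if_splits)
  obtain v where v: "eps c v \<noteq> 0" "sdeg cdim u = sdeg cdim v - 1" "set u \<subseteq> (\<Union>x\<in>set v. cl x)"
    using der_track[OF trunc_delta_track[OF lower] nz] by blast
  have "sdeg cdim v = sdeg cdim [c] - 1" "set v \<subseteq> cl c"
    using trunc_delta_track[OF lower v(1)] by auto
  then have "set u \<subseteq> cl c"
    using v(3) cl_mono by blast
  moreover have "sdeg cdim u = int (cdim c) - 3"
    using v(2) \<open>sdeg cdim v = sdeg cdim [c] - 1\<close> by (simp add: sdeg_def)
  ultimately show ?thesis using lu by (auto simp: sdeg_def)
qed

lemma obstruction_dim0: "cdim c = 0 \<Longrightarrow> obstruction c u = 0"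
  using der_sq_word_dim0[OF lower] N2 by (simp add: obstruction_def)

text \<open>\<open>D\<close> commutes with \<open>D\<^sup>2\<close>; in word length \<open>N + 1\<close> only \<open>\<delta>\<^sub>1\<close> contributes to either side.\<close>

lemma bd_der_obstruction:
  assumes lu: "length u = Suc N"
  shows "bd_der (obstruction c) u = (\<Sum>f\<in>cl c. bd c f * obstruction f u)"
proof -
  have fDw: "fsupp (der_word cdim eps v)" for v by (rule fsupp_der_word) (rule fsupp_eps)
  have "der cdim eps (der_sq_word cdim eps [c]) u = bd_der (der_sq_word cdim eps [c]) u"
  proof (rule der_cong_map)
    fix v :: "'c list" and c' and w :: "'c list"
    assume "der_sq_word cdim eps [c] v \<noteq> 0" "length u + 1 = length v + length w"
    then show "eps c' w = bd_map c' w"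
      using der_sq_eps_length[of "[c]" v] lu by (intro eps_short) simp
  qed
  also have "\<dots> = bd_der (obstruction c) u"
  proof (rule der_cong)
    show "fsupp (der_sq_word cdim eps [c])"
      unfolding der_sq_word_single by (rule fsupp_der[OF fsupp_eps fsupp_eps])
    fix v :: "'c list" and c' and w :: "'c list"
    assume "bd_map c' w \<noteq> 0" "length u + 1 = length v + length w"
    then show "der_sq_word cdim eps [c] v = obstruction c v"
      using lu by (auto simp: obstruction_def dest!: bd_map_nonzeroD)
  qed (rule fsupp_obstruction)
  finally have "bd_der (obstruction c) u = der cdim eps (der_sq_word cdim eps [c]) u" ..
  also have "\<dots> = linext (der_sq_word cdim eps) (eps c) u"
    unfolding der_sq_word_single der_def[of cdim eps "eps c"]
    by (subst der_linext[OF fsupp_eps fDw]) (simp add: der_sq_word_def[abs_def])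
  also have "\<dots> = (\<Sum>f\<in>cl c. eps c [f] * der_sq_word cdim eps [f] u)"
  proof (rule linext_letters[OF fsupp_eps finite_cl])
    fix v assume "eps c v \<noteq> 0" "der_sq_word cdim eps v u \<noteq> 0"
    then show "\<exists>f\<in>cl c. v = [f]"
      using eps_nonzeroD[of c v] der_sq_eps_length[of v u] lu by (cases v) auto
  qed
  also have "\<dots> = (\<Sum>f\<in>cl c. bd c f * obstruction f u)"
    using lu by (simp add: eps_letter obstruction_def)
  finally show ?thesis .
qed

text \<open>The conditions on \<open>\<delta>\<^bsub>N+1\<^esub> c = y\<close>, given the values \<open>G\<close> of \<open>\<delta>\<^bsub>N+1\<^esub>\<close> on the faces of \<open>c\<close>.\<close>

definition next_at :: "('c \<Rightarrow> 'c list \<Rightarrow> rat) \<Rightarrow> 'c \<Rightarrow> ('c list \<Rightarrow> rat) \<Rightarrow> bool" where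
  "next_at G c y \<longleftrightarrow> fsupp y \<and>
     (\<forall>u. y u \<noteq> 0 \<longrightarrow> length u = Suc N \<and> set u \<subseteq> cl c \<and> sum_list (map cdim u) + 2 = cdim c + Suc N) \<and>
     (cdim c = 0 \<longrightarrow> (\<forall>u. y u = 0)) \<and>
     (\<forall>u. length u = Suc N \<longrightarrow> bd_der y u + obstruction c u + (\<Sum>f\<in>cl c. bd c f * G f u) = 0)"

lemma next_at_cong:
  assumes "\<And>f. cdim f < cdim c \<Longrightarrow> G f = G' f" "next_at G c y"
  shows "next_at G' c y"
  using assms(2) bd_sum_cong[of c G G', OF assms(1)] by (simp add: next_at_def)

context
  fixes G :: "'c \<Rightarrow> 'c list \<Rightarrow> rat" and c :: 'c
  assumes faces: "\<And>f. cdim f < cdim c \<Longrightarrow> next_at G f (G f)"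
begin

lemma next_at_face:
  assumes "bd c f \<noteq> 0"
  shows "fsupp (G f)"
    and "G f u \<noteq> 0 \<Longrightarrow> length u = Suc N \<and> set u \<subseteq> cl c \<and> sum_list (map cdim u) + 3 = cdim c + Suc N"
    and "length u = Suc N \<Longrightarrow> bd_der (G f) u = - obstruction f u - (\<Sum>g\<in>cl f. bd f g * G g u)"
proof -
  have f: "f \<in> cl c" "cdim f + 1 = cdim c" using bd_nonzeroD[OF assms] by auto
  then have "next_at G f (G f)" using faces by simp
  then show "fsupp (G f)" "G f u \<noteq> 0 \<Longrightarrow> length u = Suc N \<and> set u \<subseteq> cl c \<and> sum_list (map cdim u) + 3 = cdim c + Suc N"
    "length u = Suc N \<Longrightarrow> bd_der (G f) u = - obstruction f u - (\<Sum>g\<in>cl f. bd f g * G g u)"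
    using f cl_mono[OF f(1)] unfolding next_at_def by (auto simp: eq_diff_eq)
qed

lemma fsupp_face_boundary_term: "fsupp (\<lambda>u. bd c f * G f u)"
  by (cases "bd c f = 0") (auto intro: fsupp_scale next_at_face(1))

definition next_boundary :: "'c list \<Rightarrow> rat" where
  "next_boundary = (\<lambda>u. - (obstruction c u + (\<Sum>f\<in>cl c. bd c f * G f u)))"

lemma tensor_in_next_boundary: "tensor_in (cl c) (Suc N) (cdim c + N - 2) next_boundary"
proof -
  have "length u = Suc N \<and> set u \<subseteq> cl c \<and> sum_list (map cdim u) + 3 = cdim c + Suc N"
    if "next_boundary u \<noteq> 0" for u
  proof (cases "obstruction c u = 0")
    case True
    then have "(\<Sum>f\<in>cl c. bd c f * G f u) \<noteq> 0" using that by (simp add: next_boundary_def)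
    then obtain f where "bd c f * G f u \<noteq> 0"
      by (meson sum.not_neutral_contains_not_neutral)
    then show ?thesis using next_at_face(2)[of f u] by auto
  qed (rule obstruction_nonzeroD)
  moreover have "fsupp next_boundary"
    unfolding next_boundary_def
    by (intro fsupp_neg fsupp_add fsupp_obstruction fsupp_sum finite_cl fsupp_face_boundary_term)
  ultimately show ?thesis unfolding tensor_in_def by force
qed

lemma bd_der_next_boundary: "bd_der next_boundary = (\<lambda>_. 0)"
proof
  fix u
  show "bd_der next_boundary u = 0"
  proof (cases "length u = Suc N")
    case False
    then show ?thesis
      using bd_der_nonzero_length tensor_in_next_boundary by (fastforce simp: tensor_in_def)
  next
    case True
    let ?B = "\<lambda>u. \<Sum>f\<in>cl c. bd c f * G f u"
    have "bd_der ?B u = (\<Sum>f\<in>cl c. bd c f * bd_der (G f) u)"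
      by (simp add: der_sum[OF finite_cl fsupp_face_boundary_term] der_scale)
    also have "\<dots> = (\<Sum>f\<in>cl c. - (bd c f * obstruction f u) - bd c f * (\<Sum>g\<in>cl f. bd f g * G g u))"
    proof (rule sum.cong[OF refl])
      fix f
      show "bd c f * bd_der (G f) u = - (bd c f * obstruction f u) - bd c f * (\<Sum>g\<in>cl f. bd f g * G g u)"
        by (cases "bd c f = 0") (simp_all add: next_at_face(3)[OF _ True] right_diff_distrib)
    qed
    also have "\<dots> = - (\<Sum>f\<in>cl c. bd c f * obstruction f u)"
      by (simp add: sum_subtractf sum_negf bd_bd_sum)
    finally have "bd_der ?B u = - (\<Sum>f\<in>cl c. bd c f * obstruction f u)" .
    moreover have "bd_der next_boundary u = - (bd_der (obstruction c) u + bd_der ?B u)"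
      unfolding next_boundary_def
      by (simp only: der_neg der_add[OF fsupp_obstruction fsupp_sum[OF finite_cl fsupp_face_boundary_term]])
    ultimately show ?thesis by (simp add: bd_der_obstruction[OF True])
  qed
qed

lemma next_at_exists: "\<exists>y. next_at G c y"
proof (cases "cdim c = 0")
  case True
  then have "next_at G c (\<lambda>_. 0)" by (simp add: next_at_def obstruction_dim0 bd_dim0)
  then show ?thesis by blast
next
  case False
  then have "1 \<le> cdim c + N - 2" using N2 by simp
  then obtain y where y: "tensor_in (cl c) (Suc N) (Suc (cdim c + N - 2)) y" "bd_der y = next_boundary"
    using closure_tensor_cycle_is_boundary[OF tensor_in_next_boundary _ bd_der_next_boundary] by blast
  then have "next_at G c y"
    using False N2 by (auto simp: next_at_def tensor_in_def next_boundary_def)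
  then show ?thesis by blast
qed

end

lemma exists_next_component: "\<exists>g. \<forall>c. next_at g c (g c)"
  by (rule exists_fun_by_measure_rec[of cdim]) (fact next_at_cong, fact next_at_exists)

lemma trunc_delta_update:
  assumes "higher_delta (Suc N) g"
  shows "trunc_delta (Suc N) (\<delta>(Suc N := g)) = (\<lambda>c w. eps c w + g c w)"
proof (intro ext)
  fix c w
  have "g c w = 0" if "length w \<noteq> Suc N" using assms that by (auto simp: higher_delta_def)
  then show "trunc_delta (Suc N) (\<delta>(Suc N := g)) c w = eps c w + g c w"
    using N2 by (cases "length w" "Suc N" rule: linorder_cases) (auto simp: trunc_delta_def total_delta_def)
qed

lemma der_eps_length_k:
  assumes "\<And>v. t v \<noteq> 0 \<Longrightarrow> length v = Suc N" "fsupp t" "length u \<le> Suc N"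
  shows "der cdim eps t u = (if length u = Suc N then bd_der t u else 0)"
proof (cases "length u = Suc N")
  case True
  have "der cdim eps t u = bd_der t u"
  proof (rule der_cong_map)
    fix v :: "'c list" and c and w :: "'c list"
    assume "t v \<noteq> 0" "length u + 1 = length v + length w"
    then show "eps c w = bd_map c w" using assms(1) True by (intro eps_short) simp
  qed
  then show ?thesis using True by simp
next
  case False
  have "der cdim eps t u = 0"
  proof (rule ccontr)
    assume "der cdim eps t u \<noteq> 0"
    then obtain v p c s w where "t v \<noteq> 0" "v = p @ c # s" "u = p @ w @ s" "eps c w \<noteq> 0"
      using der_nonzeroD by blast
    then show False using assms(1)[of v] eps_nonzeroD[of c w] assms(3) False by simp
  qed
  then show ?thesis using False by simp
qed

lemma der_length_k_eps:
  assumes "\<And>c v. g c v \<noteq> 0 \<Longrightarrow> length v = Suc N" "length u \<le> Suc N"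
  shows "der cdim g (eps c) u = (if length u = Suc N then (\<Sum>f\<in>cl c. bd c f * g f u) else 0)"
proof (cases "length u = Suc N")
  case True
  have "der cdim g (eps c) u = (\<Sum>f\<in>cl c. eps c [f] * der_word cdim g [f] u)"
    unfolding der_def
  proof (rule linext_letters[OF fsupp_eps finite_cl])
    fix v assume v: "eps c v \<noteq> 0" "der_word cdim g v u \<noteq> 0"
    then obtain p c' s w where "v = p @ c' # s" "u = p @ w @ s" "g c' w \<noteq> 0"
      using der_word_nonzeroD by blast
    then have "length v = 1" using assms(1)[of c' w] True by simp
    then show "\<exists>f\<in>cl c. v = [f]" using eps_nonzeroD[OF v(1)] by (cases v) auto
  qed
  then show ?thesis using True by (simp add: eps_letter)
next
  case False
  have "der cdim g (eps c) u = 0"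
  proof (rule ccontr)
    assume "der cdim g (eps c) u \<noteq> 0"
    then obtain v p c' s w where "eps c v \<noteq> 0" "v = p @ c' # s" "u = p @ w @ s" "g c' w \<noteq> 0"
      by (blast dest: der_nonzeroD)
    then show False using assms(1)[of c' w] assms(2) False by simp
  qed
  then show ?thesis using False by simp
qed

lemma exists_next_delta: "\<exists>g. higher_delta (Suc N) g \<and> sq_zero_upto (\<delta>(Suc N := g)) (Suc N)"
proof -
  obtain g where g: "\<And>c. next_at g c (g c)" using exists_next_component by blast
  have fg: "fsupp (g c)" and g_length: "g c v \<noteq> 0 \<Longrightarrow> length v = Suc N"
    and g_eq: "length u = Suc N \<Longrightarrow> bd_der (g c) u + obstruction c u + (\<Sum>f\<in>cl c. bd c f * g f u) = 0"
    for c u v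
    using g[of c] unfolding next_at_def by blast+
  have good: "higher_delta (Suc N) g"
    using g unfolding higher_delta_def local_map_def next_at_def by blast
  have "der_sq_word cdim (trunc_delta (Suc N) (\<delta>(Suc N := g))) [c] u = 0" if lu: "length u \<le> Suc N" for c u
  proof -
    let ?e = "\<lambda>c w. eps c w + g c w"
    have "der cdim g (g c) u = 0"
    proof (rule ccontr)
      assume "der cdim g (g c) u \<noteq> 0"
      then obtain v p c' s w where "g c v \<noteq> 0" "v = p @ c' # s" "u = p @ w @ s" "g c' w \<noteq> 0"
        using der_nonzeroD by blast
      then show False using lu N2 g_length[of c v] g_length[of c' w] by simp
    qed
    then have "der cdim ?e (?e c) u
        = der_sq_word cdim eps [c] u + der cdim eps (g c) u + der cdim g (eps c) u"
      by (simp add: der_add_map der_add[OF fsupp_eps fg] der_sq_word_single)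
    also have "\<dots> = (if length u = Suc N then bd_der (g c) u + obstruction c u + (\<Sum>f\<in>cl c. bd c f * g f u) else 0)"
      using lu der_sq_eps_short[of u c]
      by (simp add: der_eps_length_k[OF g_length fg lu] der_length_k_eps[OF g_length lu] obstruction_def)
    also have "\<dots> = 0" using g_eq by simp
    finally show ?thesis by (simp add: trunc_delta_update[OF good] der_sq_word_single)
  qed
  then show ?thesis using good by (auto simp: sq_zero_upto_def)
qed

end

end

section \<open>The total derivation squares to zero\<close>

context local_comult
begin

primrec delta_seq :: "nat \<Rightarrow> nat \<Rightarrow> 'c \<Rightarrow> 'c list \<Rightarrow> rat" where
  "delta_seq 0 = (\<lambda>_ _ _. 0)"
| "delta_seq (Suc n) = (if 2 \<le> n
     then (delta_seq n)(Suc n := SOME g. higher_delta (Suc n) g \<and> sq_zero_upto ((delta_seq n)(Suc n := g)) (Suc n))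
     else delta_seq n)"

lemma delta_seq_stable: "j \<le> n \<Longrightarrow> delta_seq n j = delta_seq j j"
  by (induction n) (auto simp: le_Suc_eq)

lemma delta_seq_props: "2 \<le> n \<Longrightarrow> higher_deltas (delta_seq n) n \<and> sq_zero_upto (delta_seq n) n"
proof (induction n)
  case 0
  then show ?case by simp
next
  case (Suc n)
  show ?case
  proof (cases "2 \<le> n")
    case False
    then have "Suc n = 2" using Suc.prems by simp
    moreover have "higher_deltas (delta_seq 2) 2" by (auto simp: higher_deltas_def)
    ultimately show ?thesis using sq_zero_upto_2 by metis
  next
    case True
    then have IH: "higher_deltas (delta_seq n) n" "sq_zero_upto (delta_seq n) n" using Suc.IH by auto
    define g where "g = (SOME g. higher_delta (Suc n) g \<and> sq_zero_upto ((delta_seq n)(Suc n := g)) (Suc n))"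
    have g: "higher_delta (Suc n) g" "sq_zero_upto ((delta_seq n)(Suc n := g)) (Suc n)"
      unfolding g_def using someI_ex[OF exists_next_delta[OF True IH]] by blast+
    have step: "delta_seq (Suc n) = (delta_seq n)(Suc n := g)"
      using True by (simp add: g_def)
    have "higher_deltas ((delta_seq n)(Suc n := g)) (Suc n)"
      using IH(1) g(1) unfolding higher_deltas_def by (auto simp: le_Suc_eq)
    then show ?thesis using g(2) unfolding step by blast
  qed
qed

lemma higher_delta_delta_seq: "3 \<le> k \<Longrightarrow> higher_delta k (delta_seq k k)"
  using delta_seq_props[of k] by (simp add: higher_deltas_def)

lemma deriv_sq_delta_seq:
  assumes "fsupp t"
  shows "deriv cdim (total_delta cdim bd \<Delta> (\<lambda>j. delta_seq j j))
           (deriv cdim (total_delta cdim bd \<Delta> (\<lambda>j. delta_seq j j)) t) u = 0"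
proof -
  let ?D = "total_delta cdim bd \<Delta> (\<lambda>j. delta_seq j j)"
  define N where "N = length u + 2"
  let ?e = "trunc_delta N (delta_seq N)"
  have props: "higher_deltas (delta_seq N) N" "sq_zero_upto (delta_seq N) N"
    using delta_seq_props[of N] by (auto simp: N_def)
  have agree: "?D c w = ?e c w" if "length w \<le> N" for c w
    using that delta_seq_stable[OF that] by (simp add: trunc_delta_def total_delta_def)
  have fe: "fsupp (?e c)" for c by (rule fsupp_trunc_delta[OF props(1)])
  have inner: "deriv cdim ?D t v = deriv cdim ?e t v" if "length v \<le> length u + 1" for v
    by (rule deriv_cong) (simp, rule agree, use that in \<open>simp add: N_def\<close>)
  have "deriv cdim ?D (deriv cdim ?D t) u = deriv cdim ?e (deriv cdim ?e t) u"
    by (rule deriv_cong[OF inner]) (simp, rule agree, simp add: N_def)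
  also have "deriv cdim ?e t = der cdim ?e t"
    by (rule ext) (rule deriv_eq_der[OF assms])
  also have "deriv cdim ?e (der cdim ?e t) u = der cdim ?e (der cdim ?e t) u"
    by (rule deriv_eq_der[OF fsupp_der[OF assms fe]])
  also have "\<dots> = linext (der_sq_word cdim ?e) t u"
    unfolding der_def[of cdim ?e t]
    by (subst der_linext[OF assms]) (auto intro: fsupp_der_word fe simp: der_sq_word_def[abs_def])
  also have "\<dots> = 0"
  proof -
    have "der_sq_word cdim ?e v u = 0" for v
    proof (rule ccontr)
      assume "der_sq_word cdim ?e v u \<noteq> 0"
      then have "length v + Suc N \<le> length u + 1"
        by (rule der_sq_word_length[OF odd_map_trunc_delta[OF props(1)], rotated])
          (use props(2) in \<open>simp add: sq_zero_upto_def\<close>)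
      then show False by (simp add: N_def)
    qed
    then show ?thesis by (simp add: linext_def)
  qed
  finally show ?thesis .
qed

end

theorem mainTheorem9:
  fixes cdim :: "'c \<Rightarrow> nat" and bd :: "'c \<Rightarrow> 'c \<Rightarrow> rat" and cl :: "'c \<Rightarrow> 'c set"
    and \<Delta> :: "'c \<Rightarrow> 'c \<Rightarrow> 'c \<Rightarrow> rat"
  assumes cx: "cell_complex cdim bd cl"
    and acyc: "\<forall>e. rat_homology_of_point cdim bd (cl e)"
    and loc2: "\<forall>e a b. \<Delta> e a b \<noteq> 0 \<longrightarrow> a \<in> cl e \<and> b \<in> cl e"
    and deg2: "\<forall>e a b. \<Delta> e a b \<noteq> 0 \<longrightarrow> cdim a + cdim b = cdim e"
    and chain_map: "\<forall>e a b. (\<Sum>f\<in>cl e. bd e f * \<Delta> f a b) =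
          (\<Sum>x\<in>cl e. \<Delta> e x b * bd x a) + (\<Sum>y\<in>cl e. (-1) ^ cdim a * \<Delta> e a y * bd y b)"
    and cocomm0: "\<forall>e a b. cdim e = 0 \<longrightarrow> \<Delta> e a b = \<Delta> e b a"
    and coassoc0: "\<forall>e a b c. cdim e = 0 \<longrightarrow>
          (\<Sum>x\<in>cl e. \<Delta> e x c * \<Delta> x a b) = (\<Sum>x\<in>cl e. \<Delta> e a x * \<Delta> x b c)"
  shows "\<exists>\<delta> :: nat \<Rightarrow> 'c \<Rightarrow> 'c list \<Rightarrow> rat.
           (\<forall>k\<ge>3. local_map cl (\<delta> k)) \<and>
           (\<forall>k\<ge>3. \<forall>e w. cdim e = 0 \<longrightarrow> \<delta> k e w = 0) \<and>
           (\<forall>k\<ge>3. \<forall>e w. \<delta> k e w \<noteq> 0 \<longrightarrow>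
               length w = k \<and> sum_list (map cdim w) + 2 = cdim e + k) \<and>
           (\<forall>t. fsupp t \<longrightarrow>
               odd_commutator (deriv cdim (total_delta cdim bd \<Delta> \<delta>))
                              (deriv cdim (total_delta cdim bd \<Delta> \<delta>)) t = (\<lambda>_. 0))"
proof -
  \<comment> \<open>\<open>cocomm0\<close> and \<open>coassoc0\<close> hold automatically, cf. \<open>trunc_delta_dim0\<close>.\<close>
  interpret local_comult cdim bd cl \<Delta>
    by (intro local_comult.intro cell_chain_complex.intro local_comult_axioms.intro cx acyc loc2 deg2 chain_map)
  show ?thesis
    using higher_delta_delta_seq deriv_sq_delta_seq
    by (intro exI[of _ "\<lambda>j. delta_seq j j"]) (auto simp: higher_delta_def odd_commutator_def)
qed

end
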